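(* For $i=1,2$ let $A_i\xrightarrow{f_i}B_i\xrightarrow{g_i}C_i$ be based cofibration sequences (so $f_i$ is a based cofibration and $g_i$ the quotient map $B_i\to C_i=B_i/A_i$). Suppose $a:A_1\to\mathrm{SP}(A_2)$, $b:B_1\to\mathrm{SP}(B_2)$, $c:C_1\to\mathrm{SP}(C_2)$ are based maps with $b\circ f_1=\mathrm{SP}(f_2)\circ a$ and $c\circ g_1=\mathrm{SP}(g_2)\circ b$. Then the induced maps $a^*,b^*,c^*$ give a map between the long exact sequences in reduced cohomology of the two cofibration sequences; that is, $b^*g_2^*=g_1^*c^*$, $a^*f_2^*=f_1^*b^*$ and $c^*\partial_2^*=\partial_1^*a^*$, where $\partial_i^*:\widetilde{H}^*(A_i)\to\widetilde{H}^{*+1}(C_i)$ are the connecting homomorphisms.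
   Context: For a based space $(X,e)$, $\mathrm{SP}(X)$ is the free unital abelian monoid on $X$ with identity $e$, topologised as the quotient of $\bigsqcup_{n\ge1}X^n/\mathfrak{S}_n$ by $(x_1,\dots,x_n,e)\sim(x_1,\dots,x_n)$, with inclusion $\iota_X:X\to\mathrm{SP}(X)$; a based map $h$ induces the homomorphism $\mathrm{SP}(h)$. Identify $\widetilde{H}^n(Y)=[Y,\mathrm{SP}(S^n)]_*$. For $\alpha:Y\to\mathrm{SP}(S^n)$ let $\widetilde\alpha:\mathrm{SP}(Y)\to\mathrm{SP}(S^n)$ be the unique continuous monoid homomorphism with $\widetilde\alpha\circ\iota_Y=\alpha$, and for a based map $f:X\to\mathrm{SP}(Y)$ define $f^*:\widetilde H^*(Y)\to\widetilde H^*(X)$ by $f^*[\alpha]=[\widetilde\alpha\circ f]$. *)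

theory Defs
  imports "HOL-Analysis.Analysis" "HOL-Library.Multiset"
begin

abbreviation unitI :: "real topology" where
  "unitI \<equiv> top_of_set {0..1}"

definition based_map :: "'a topology \<Rightarrow> 'a \<Rightarrow> 'b topology \<Rightarrow> 'b \<Rightarrow> ('a \<Rightarrow> 'b) \<Rightarrow> bool" where
  "based_map X x0 Y y0 h \<longleftrightarrow> continuous_map X Y h \<and> h x0 = y0"

text \<open>Points of SP(X) are finite multisets of points of X different from the base
point e (the base point is the identity of the free unital abelian monoid; the empty
multiset is the identity).  SP(X) carries the quotient topology of the disjoint
union of the X^n (n \<ge> 1), i.e. U is open iff all its preimages in X^n are open.\<close>

definition sp_carrier :: "'a topology \<Rightarrow> 'a \<Rightarrow> 'a multiset set" where
  "sp_carrier X e = {M. set_mset M \<subseteq> topspace X - {e}}"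

definition sp_word :: "'a \<Rightarrow> nat \<Rightarrow> (nat \<Rightarrow> 'a) \<Rightarrow> 'a multiset" where
  "sp_word e n u = filter_mset (\<lambda>x. x \<noteq> e) (mset (map u [0..<n]))"

definition SP :: "'a topology \<Rightarrow> 'a \<Rightarrow> 'a multiset topology" where
  "SP X e = topology (\<lambda>U. U \<subseteq> sp_carrier X e \<and>
      (\<forall>n\<ge>1. openin (product_topology (\<lambda>_. X) {..<n})
          {u \<in> topspace (product_topology (\<lambda>_. X) {..<n}). sp_word e n u \<in> U}))"

definition sp_iota :: "'a \<Rightarrow> 'a \<Rightarrow> 'a multiset" where
  "sp_iota e x = (if x = e then {#} else {#x#})"

definition SPmap :: "'b \<Rightarrow> ('a \<Rightarrow> 'b) \<Rightarrow> 'a multiset \<Rightarrow> 'b multiset" where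
  "SPmap e' h M = filter_mset (\<lambda>y. y \<noteq> e') (image_mset h M)"

text \<open>The monoid homomorphism SP(Y) \<rightarrow> SP(S^n) extending \<alpha> : Y \<rightarrow> SP(S^n)
(the monoid operation on SP(S^n) is multiset union, identity the empty multiset).\<close>
definition sp_ext :: "('a \<Rightarrow> 'b multiset) \<Rightarrow> 'a multiset \<Rightarrow> 'b multiset" where
  "sp_ext \<alpha> M = sum_mset (image_mset \<alpha> M)"

section \<open>Spheres: S^n = I^n / \<partial>I^n, base point None\<close>

definition cube_top :: "nat \<Rightarrow> (nat \<Rightarrow> real) topology" where
  "cube_top n = product_topology (\<lambda>_. unitI) {..<n}"

definition cube_q :: "nat \<Rightarrow> (nat \<Rightarrow> real) \<Rightarrow> (nat \<Rightarrow> real) option" where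
  "cube_q n u = (if \<exists>i<n. u i = 0 \<or> u i = 1 then None else Some u)"

definition sphere :: "nat \<Rightarrow> (nat \<Rightarrow> real) option topology" where
  "sphere n = topology (\<lambda>U. U \<subseteq> insert None (cube_q n ` topspace (cube_top n)) \<and>
      openin (cube_top n) {u \<in> topspace (cube_top n). cube_q n u \<in> U})"

text \<open>The canonical map S^n \<times> I \<rightarrow> S^(n+1) inducing S^n \<and> S^1 \<cong> S^(n+1)
(the suspension coordinate becomes the last cube coordinate).\<close>
definition susp_pt :: "nat \<Rightarrow> (nat \<Rightarrow> real) option \<Rightarrow> real \<Rightarrow> (nat \<Rightarrow> real) option" where
  "susp_pt n y s = (case y of None \<Rightarrow> None
     | Some u \<Rightarrow> (if s \<le> 0 \<or> 1 \<le> s then None else Some (u(n := s))))"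

abbreviation SPS :: "nat \<Rightarrow> (nat \<Rightarrow> real) option multiset topology" where
  "SPS n \<equiv> SP (sphere n) None"

section \<open>Reduced cohomology  H^n(Y) = [Y, SP(S^n)]_*\<close>

definition cocycle :: "'a topology \<Rightarrow> 'a \<Rightarrow> nat \<Rightarrow> ('a \<Rightarrow> (nat \<Rightarrow> real) option multiset) \<Rightarrow> bool" where
  "cocycle Y y0 n \<alpha> \<longleftrightarrow> based_map Y y0 (SPS n) {#} \<alpha>"

definition hcls :: "'a topology \<Rightarrow> 'a \<Rightarrow> nat \<Rightarrow> ('a \<Rightarrow> (nat \<Rightarrow> real) option multiset)
     \<Rightarrow> ('a \<Rightarrow> (nat \<Rightarrow> real) option multiset) set" where
  "hcls Y y0 n \<alpha> = {\<beta>. cocycle Y y0 n \<beta> \<and> homotopic_with (\<lambda>h. h y0 = {#}) Y (SPS n) \<alpha> \<beta>}"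

definition Hred :: "'a topology \<Rightarrow> 'a \<Rightarrow> nat \<Rightarrow> ('a \<Rightarrow> (nat \<Rightarrow> real) option multiset) set set" where
  "Hred Y y0 n = {hcls Y y0 n \<alpha> | \<alpha>. cocycle Y y0 n \<alpha>}"

abbreviation rep :: "('a \<Rightarrow> 'b) set \<Rightarrow> 'a \<Rightarrow> 'b" where
  "rep \<kappa> \<equiv> (SOME \<alpha>. \<alpha> \<in> \<kappa>)"

definition sp_pull :: "'x topology \<Rightarrow> 'x \<Rightarrow> nat \<Rightarrow> ('x \<Rightarrow> 'y multiset)
    \<Rightarrow> ('y \<Rightarrow> (nat \<Rightarrow> real) option multiset) set \<Rightarrow> ('x \<Rightarrow> (nat \<Rightarrow> real) option multiset) set" where
  "sp_pull X x0 n f \<kappa> = hcls X x0 n (sp_ext (rep \<kappa>) \<circ> f)"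

definition pull :: "'x topology \<Rightarrow> 'x \<Rightarrow> nat \<Rightarrow> ('x \<Rightarrow> 'y)
    \<Rightarrow> ('y \<Rightarrow> (nat \<Rightarrow> real) option multiset) set \<Rightarrow> ('x \<Rightarrow> (nat \<Rightarrow> real) option multiset) set" where
  "pull X x0 n g \<kappa> = hcls X x0 n (rep \<kappa> \<circ> g)"

text \<open>Test spaces range over all topologies on the
type ('a + 'b) \<times> real, which is large enough to contain the reduced mapping cylinder of f
(the universal test space), so this is equivalent to the HEP for all based spaces.\<close>
definition based_cofibration :: "'a topology \<Rightarrow> 'a \<Rightarrow> 'b topology \<Rightarrow> 'b \<Rightarrow> ('a \<Rightarrow> 'b) \<Rightarrow> bool" where
  "based_cofibration A a0 B b0 f \<longleftrightarrow> a0 \<in> topspace A \<and> based_map A a0 B b0 f \<and>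
     (\<forall>(Z :: (('a + 'b) \<times> real) topology) z0 h G.
        z0 \<in> topspace Z \<and> based_map B b0 Z z0 h \<and>
        continuous_map (prod_topology A unitI) Z G \<and>
        (\<forall>x\<in>topspace A. G (x, 0) = h (f x)) \<and> (\<forall>t\<in>{0..1}. G (a0, t) = z0)
        \<longrightarrow> (\<exists>H. continuous_map (prod_topology B unitI) Z H \<and>
               (\<forall>b\<in>topspace B. H (b, 0) = h b) \<and>
               (\<forall>x\<in>topspace A. \<forall>t\<in>{0..1}. H (f x, t) = G (x, t)) \<and>
               (\<forall>t\<in>{0..1}. H (b0, t) = z0)))"

definition based_cofib_seq :: "'a topology \<Rightarrow> 'a \<Rightarrow> 'b topology \<Rightarrow> 'b \<Rightarrow> 'c topology \<Rightarrow> 'c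
     \<Rightarrow> ('a \<Rightarrow> 'b) \<Rightarrow> ('b \<Rightarrow> 'c) \<Rightarrow> bool" where
  "based_cofib_seq A a0 B b0 C c0 f g \<longleftrightarrow>
     based_cofibration A a0 B b0 f \<and> quotient_map B C g \<and> g b0 = c0 \<and>
     (\<forall>x\<in>topspace A. g (f x) = c0) \<and>
     (\<forall>b\<in>topspace B. \<forall>b'\<in>topspace B. g b = g b' \<longrightarrow>
         b = b' \<or> (b \<in> f ` topspace A \<and> b' \<in> f ` topspace A))"

text \<open>Suspension of \<alpha> : A \<rightarrow> SP(S^n): the map \<Sigma>A \<rightarrow> SP(S^(n+1)), written on A \<times> I.\<close>
definition susp_cocycle :: "nat \<Rightarrow> ('a \<Rightarrow> (nat \<Rightarrow> real) option multiset) \<Rightarrow> 'a \<times> real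
     \<Rightarrow> (nat \<Rightarrow> real) option multiset" where
  "susp_cocycle n \<alpha> xs = SPmap None (\<lambda>y. susp_pt n y (snd xs)) (\<alpha> (fst xs))"

text \<open>With Cf = B \<union>_f CA the reduced mapping cone, q : Cf \<rightarrow> C the collapse (a based
homotopy equivalence since f is a cofibration) and \<delta> : Cf \<rightarrow> \<Sigma>A the collapse of B,
\<partial>*[\<alpha>] is the unique class [\<beta>] with \<beta> \<circ> q \<simeq> \<Sigma>\<alpha> \<circ> \<delta> (based).  A based homotopy
Cf \<times> I \<rightarrow> SP(S^(n+1)) is written out as a pair of compatible homotopies on B \<times> I and
on the cone (A \<times> I) \<times> I (cone point at s = 1).\<close>
definition conn_rel :: "'a topology \<Rightarrow> 'a \<Rightarrow> 'b topology \<Rightarrow> 'b \<Rightarrow> ('a \<Rightarrow> 'b) \<Rightarrow> ('b \<Rightarrow> 'c)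
     \<Rightarrow> nat \<Rightarrow> ('a \<Rightarrow> (nat \<Rightarrow> real) option multiset) \<Rightarrow> ('c \<Rightarrow> (nat \<Rightarrow> real) option multiset) \<Rightarrow> bool" where
  "conn_rel A a0 B b0 f g n \<alpha> \<beta> \<longleftrightarrow>
     (\<exists>HB HA.
        continuous_map (prod_topology B unitI) (SPS (Suc n)) HB \<and>
        continuous_map (prod_topology (prod_topology A unitI) unitI) (SPS (Suc n)) HA \<and>
        (\<forall>b\<in>topspace B. HB (b, 0) = \<beta> (g b) \<and> HB (b, 1) = {#}) \<and>
        (\<forall>t\<in>{0..1}. HB (b0, t) = {#}) \<and>
        (\<forall>x\<in>topspace A. \<forall>s\<in>{0..1}.
            HA ((x, s), 0) = {#} \<and> HA ((x, s), 1) = susp_cocycle n \<alpha> (x, s)) \<and>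
        (\<forall>x\<in>topspace A. \<forall>t\<in>{0..1}. HA ((x, 0), t) = HB (f x, t) \<and> HA ((x, 1), t) = {#}) \<and>
        (\<forall>s\<in>{0..1}. \<forall>t\<in>{0..1}. HA ((a0, s), t) = {#}))"

definition connecting :: "'a topology \<Rightarrow> 'a \<Rightarrow> 'b topology \<Rightarrow> 'b \<Rightarrow> 'c topology \<Rightarrow> 'c
     \<Rightarrow> ('a \<Rightarrow> 'b) \<Rightarrow> ('b \<Rightarrow> 'c) \<Rightarrow> nat
     \<Rightarrow> ('a \<Rightarrow> (nat \<Rightarrow> real) option multiset) set \<Rightarrow> ('c \<Rightarrow> (nat \<Rightarrow> real) option multiset) set" where
  "connecting A a0 B b0 C c0 f g n \<kappa> =
     hcls C c0 (Suc n) (SOME \<beta>. cocycle C c0 (Suc n) \<beta> \<and> conn_rel A a0 B b0 f g n (rep \<kappa>) \<beta>)"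

end

theory Submission
  imports Defs
begin

abbreviation powertop :: "'a topology \<Rightarrow> nat \<Rightarrow> (nat \<Rightarrow> 'a) topology" where
  "powertop X n \<equiv> product_topology (\<lambda>_. X) {..<n}"

lemma continuous_map_in_topspace:
  "continuous_map X Y f \<Longrightarrow> x \<in> topspace X \<Longrightarrow> f x \<in> topspace Y"
  by (meson continuous_map_image_subset_topspace image_subset_iff)

lemma open_map_prod_neighbourhood:
  assumes \<psi>: "continuous_map (prod_topology Z X) W (\<lambda>(z,x). \<psi> (z, j x))"
    and j: "open_map X Y j" and U: "openin W U"
    and zx: "z \<in> topspace Z" "x \<in> topspace X" "\<psi> (z, j x) \<in> U"
  shows "\<exists>T. openin (prod_topology Z Y) T \<and> (z, j x) \<in> T \<and> T \<subseteq> {p. \<psi> p \<in> U}"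
proof -
  let ?P = "{p \<in> topspace (prod_topology Z X). (\<lambda>(z,x). \<psi> (z, j x)) p \<in> U}"
  have "openin (prod_topology Z X) ?P"
    using \<psi> U by (rule openin_continuous_map_preimage)
  moreover have "(z,x) \<in> ?P" using zx by simp
  ultimately obtain V S where VS: "openin Z V" "openin X S" "z \<in> V" "x \<in> S" "V \<times> S \<subseteq> ?P"
    unfolding openin_prod_topology_alt by meson
  show ?thesis
  proof (intro exI conjI)
    show "openin (prod_topology Z Y) (V \<times> j ` S)"
      using VS j by (simp add: openin_prod_Times_iff open_map_def)
    show "(z, j x) \<in> V \<times> j ` S" using VS by blast
    show "V \<times> j ` S \<subseteq> {p. \<psi> p \<in> U}" using VS(5) by auto
  qed
qed

lemma continuous_map_prod_sum_topology:
  assumes "\<And>i. i \<in> I \<Longrightarrow> continuous_map (prod_topology Z (X i)) W (\<lambda>(z,x). \<psi> (z,(i,x)))"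
  shows "continuous_map (prod_topology Z (sum_topology X I)) W \<psi>"
  unfolding continuous_map_def
proof (intro conjI allI impI)
  show "\<psi> \<in> topspace (prod_topology Z (sum_topology X I)) \<rightarrow> topspace W"
  proof
    fix p assume "p \<in> topspace (prod_topology Z (sum_topology X I))"
    then obtain z i x where "p = (z,(i,x))" "z \<in> topspace Z" "i \<in> I" "x \<in> topspace (X i)"
      by auto
    then show "\<psi> p \<in> topspace W"
      using continuous_map_in_topspace[OF assms, of i "(z,x)"] by simp
  qed
  fix U assume U: "openin W U"
  show "openin (prod_topology Z (sum_topology X I)) {p \<in> topspace (prod_topology Z (sum_topology X I)). \<psi> p \<in> U}"
  proof (subst openin_subopen, intro ballI)
    fix p assume "p \<in> {p \<in> topspace (prod_topology Z (sum_topology X I)). \<psi> p \<in> U}"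
    then obtain z i x where p: "p = (z,(i,x))" "z \<in> topspace Z" "i \<in> I" "x \<in> topspace (X i)" "\<psi> p \<in> U"
      by auto
    obtain T where T: "openin (prod_topology Z (sum_topology X I)) T" "p \<in> T" "T \<subseteq> {p. \<psi> p \<in> U}"
      using open_map_prod_neighbourhood[where j = "Pair i" and \<psi> = \<psi>,
          OF assms[OF p(3)] open_map_component_injection[where X = X, OF p(3)] U, of z x] p
      by auto
    have "T \<subseteq> {p \<in> topspace (prod_topology Z (sum_topology X I)). \<psi> p \<in> U}"
      using openin_subset[OF T(1)] T(3) by blast
    then show "\<exists>T. openin (prod_topology Z (sum_topology X I)) T \<and> p \<in> T
                 \<and> T \<subseteq> {p \<in> topspace (prod_topology Z (sum_topology X I)). \<psi> p \<in> U}"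
      using T by blast
  qed
qed

lemma continuous_map_prod_quotient:
  assumes Z: "locally_compact_space Z" "Hausdorff_space Z"
    and Q: "quotient_map X Y q"
    and \<phi>: "continuous_map (prod_topology Z X) W (\<lambda>(z,x). \<phi> (z, q x))"
  shows "continuous_map (prod_topology Z Y) W \<phi>"
proof -
  have "quotient_map (prod_topology Z X) (prod_topology Z Y) (\<lambda>(z,x). (z, q x))"
    using quotient_map_prod_right[OF Z(1) _ Q] Z(2) by blast
  moreover have "continuous_map (prod_topology Z X) W (\<phi> \<circ> (\<lambda>(z,x). (z, q x)))"
    using \<phi> by (simp add: o_def case_prod_unfold)
  ultimately show ?thesis by (rule continuous_compose_quotient_map)
qed

lemma locally_compact_space_unitI: "locally_compact_space unitI"
  by (simp add: compact_imp_locally_compact_space compact_space_subtopology compactin_euclidean_iff)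

lemma Hausdorff_space_unitI: "Hausdorff_space unitI"
  by (simp add: Hausdorff_space_subtopology)

section \<open>The infinite symmetric product\<close>

lemma istopology_SP:
  "istopology (\<lambda>U. U \<subseteq> sp_carrier X e \<and>
      (\<forall>n\<ge>1. openin (powertop X n) {u \<in> topspace (powertop X n). sp_word e n u \<in> U}))"
proof -
  have int: "{u \<in> topspace (powertop X n). sp_word e n u \<in> S \<inter> T} =
      {u \<in> topspace (powertop X n). sp_word e n u \<in> S} \<inter> {u \<in> topspace (powertop X n). sp_word e n u \<in> T}"
    for S T n by blast
  have union: "{u \<in> topspace (powertop X n). sp_word e n u \<in> \<Union>K} =
      \<Union>((\<lambda>S. {u \<in> topspace (powertop X n). sp_word e n u \<in> S}) ` K)" for K n
    by blast
  show ?thesis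
    unfolding istopology_def int union by (auto intro!: openin_Int openin_Union)
qed

lemma openin_SP:
  "openin (SP X e) U \<longleftrightarrow> U \<subseteq> sp_carrier X e \<and>
      (\<forall>n\<ge>1. openin (powertop X n) {u \<in> topspace (powertop X n). sp_word e n u \<in> U})"
  unfolding SP_def topology_inverse'[OF istopology_SP] by (rule refl)

lemma sp_word_in_sp_carrier: "u \<in> topspace (powertop X n) \<Longrightarrow> sp_word e n u \<in> sp_carrier X e"
  by (auto simp: sp_word_def sp_carrier_def PiE_iff)

lemma topspace_SP [simp]: "topspace (SP X e) = sp_carrier X e"
proof -
  have eq: "{u \<in> topspace (powertop X n). sp_word e n u \<in> sp_carrier X e} = topspace (powertop X n)" for n
    using sp_word_in_sp_carrier[of _ X n e] by blast
  have "openin (SP X e) (sp_carrier X e)"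
    unfolding openin_SP eq by (simp only: openin_topspace subset_refl simp_thms)
  then show ?thesis
    using openin_subset openin_SP[of X e "topspace (SP X e)"] by blast
qed

lemma sp_word_0 [simp]: "sp_word e 0 u = {#}"
  by (simp add: sp_word_def)

lemma sp_word_Suc: "sp_word e (Suc n) u = sp_word e n u + (if u n = e then {#} else {#u n#})"
  by (simp add: sp_word_def)

lemma sp_word_cong: "(\<And>i. i < n \<Longrightarrow> u i = v i) \<Longrightarrow> sp_word e n u = sp_word e n v"
  by (induct n) (simp_all add: sp_word_Suc)

lemma empty_in_sp_carrier [simp]: "{#} \<in> sp_carrier X e"
  by (simp add: sp_carrier_def)

lemma add_in_sp_carrier: "M \<in> sp_carrier X e \<Longrightarrow> N \<in> sp_carrier X e \<Longrightarrow> M + N \<in> sp_carrier X e"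
  by (auto simp: sp_carrier_def)

lemma continuous_map_sp_word: "continuous_map (powertop X n) (SP X e) (sp_word e n)"
proof (cases "n = 0")
  case True
  moreover have "sp_word e 0 = (\<lambda>_. {#})" by (simp add: fun_eq_iff)
  ultimately show ?thesis by (simp add: continuous_map_const)
next
  case False
  show ?thesis
    unfolding continuous_map_def
  proof (intro conjI allI impI)
    show "sp_word e n \<in> topspace (powertop X n) \<rightarrow> topspace (SP X e)"
      using sp_word_in_sp_carrier by fastforce
    show "openin (powertop X n) {u \<in> topspace (powertop X n). sp_word e n u \<in> U}"
      if "openin (SP X e) U" for U
      using that False unfolding openin_SP by simp
  qed
qed

lemma sp_word_surjective:
  assumes M: "M \<in> sp_carrier X e" and e: "e \<in> topspace X" and n: "size M \<le> n"
  obtains u where "u \<in> topspace (powertop X n)" "sp_word e n u = M"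
proof -
  obtain xs where xs: "mset xs = M" by (metis ex_mset)
  define u where "u = (\<lambda>i. if i < n then (if i < length xs then xs ! i else e) else undefined)"
  have len: "length xs \<le> n" using n xs by auto
  have "map u [0..<n] = xs @ replicate (n - length xs) e"
    by (rule nth_equalityI) (use len in \<open>auto simp: u_def nth_append\<close>)
  moreover have "e \<notin> set xs" "set xs \<subseteq> topspace X" using M xs by (auto simp: sp_carrier_def)
  moreover have "filter_mset (\<lambda>x. x \<noteq> e) (replicate_mset k e) = {#}" for k
    by (induct k) auto
  moreover have "filter_mset (\<lambda>x. x \<noteq> e) (mset xs) = mset xs"
    using \<open>e \<notin> set xs\<close> by (induct xs) auto
  ultimately have "sp_word e n u = M"
    using xs by (simp add: sp_word_def)
  moreover have "u \<in> topspace (powertop X n)"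
    using \<open>set xs \<subseteq> topspace X\<close> e nth_mem by (fastforce simp: u_def PiE_iff extensional_def)
  ultimately show ?thesis by (rule that[rotated])
qed

lemma quotient_map_SP:
  assumes e: "e \<in> topspace X"
  shows "quotient_map (sum_topology (powertop X) {1..}) (SP X e) (\<lambda>(n,u). sp_word e n u)"
  unfolding quotient_map_def
proof (intro conjI allI impI)
  show "(\<lambda>(n,u). sp_word e n u) ` topspace (sum_topology (powertop X) {1..}) = topspace (SP X e)"
  proof
    show "topspace (SP X e) \<subseteq> (\<lambda>(n,u). sp_word e n u) ` topspace (sum_topology (powertop X) {1..})"
    proof
      fix M assume "M \<in> topspace (SP X e)"
      then have "M \<in> sp_carrier X e" by simp
      then obtain u where "u \<in> topspace (powertop X (max 1 (size M)))" "sp_word e (max 1 (size M)) u = M"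
        using e by (rule sp_word_surjective[of M X e "max 1 (size M)"]) auto
      then show "M \<in> (\<lambda>(n,u). sp_word e n u) ` topspace (sum_topology (powertop X) {1..})"
        by (force intro!: image_eqI[of _ _ "(max 1 (size M), u)"])
    qed
  qed (use sp_word_in_sp_carrier in fastforce)
qed (auto simp: openin_sum_topology openin_SP)

lemma continuous_map_prod_SP:
  assumes Z: "locally_compact_space Z" "Hausdorff_space Z" and e: "e \<in> topspace X"
    and \<phi>: "\<And>n. n \<ge> 1 \<Longrightarrow> continuous_map (prod_topology Z (powertop X n)) W (\<lambda>(z,u). \<phi> (z, sp_word e n u))"
  shows "continuous_map (prod_topology Z (SP X e)) W \<phi>"
  by (rule continuous_map_prod_quotient[OF Z quotient_map_SP[OF e]], rule continuous_map_prod_sum_topology)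
     (use \<phi> in auto)

lemma continuous_map_SP:
  assumes e: "e \<in> topspace X"
    and \<phi>: "\<And>n. n \<ge> 1 \<Longrightarrow> continuous_map (powertop X n) W (\<lambda>u. \<phi> (sp_word e n u))"
  shows "continuous_map (SP X e) W \<phi>"
  unfolding continuous_map_def
proof (intro conjI allI impI)
  show "\<phi> \<in> topspace (SP X e) \<rightarrow> topspace W"
  proof
    fix M assume "M \<in> topspace (SP X e)"
    then have "M \<in> sp_carrier X e" by simp
    then obtain u where "u \<in> topspace (powertop X (max 1 (size M)))" "sp_word e (max 1 (size M)) u = M"
      using e by (rule sp_word_surjective[of M X e "max 1 (size M)"]) auto
    then show "\<phi> M \<in> topspace W"
      using continuous_map_in_topspace[OF \<phi>, of "max 1 (size M)" u] by simp
  qed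
  fix U assume U: "openin W U"
  have "{u \<in> topspace (powertop X n). sp_word e n u \<in> {M \<in> topspace (SP X e). \<phi> M \<in> U}} =
        {u \<in> topspace (powertop X n). \<phi> (sp_word e n u) \<in> U}" for n
    using sp_word_in_sp_carrier by fastforce
  moreover have "openin (powertop X n) {u \<in> topspace (powertop X n). \<phi> (sp_word e n u) \<in> U}"
    if "n \<ge> 1" for n
    using \<phi>[OF that] U by (simp add: continuous_map_def)
  ultimately show "openin (SP X e) {M \<in> topspace (SP X e). \<phi> M \<in> U}"
    unfolding openin_SP by auto
qed

lemma sp_ext_empty [simp]: "sp_ext \<alpha> {#} = {#}"
  by (simp add: sp_ext_def)

lemma sp_ext_add [simp]: "sp_ext \<alpha> (M + N) = sp_ext \<alpha> M + sp_ext \<alpha> N"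
  by (simp add: sp_ext_def)

lemma sp_ext_add_mset [simp]: "sp_ext \<alpha> (add_mset x M) = \<alpha> x + sp_ext \<alpha> M"
  by (simp add: sp_ext_def)

lemma sp_ext_cong: "(\<And>x. x \<in># M \<Longrightarrow> \<alpha> x = \<beta> x) \<Longrightarrow> sp_ext \<alpha> M = sp_ext \<beta> M"
  unfolding sp_ext_def by (metis image_mset_cong)

lemma sp_ext_eq_empty: "(\<And>x. x \<in># M \<Longrightarrow> \<alpha> x = {#}) \<Longrightarrow> sp_ext \<alpha> M = {#}"
  using sp_ext_cong[of M \<alpha> "\<lambda>_. {#}"] by (simp add: sp_ext_def)

lemma sp_ext_sp_word: "\<alpha> e = {#} \<Longrightarrow> sp_ext \<alpha> (sp_word e n u) = (\<Sum>i<n. \<alpha> (u i))"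
  by (induct n) (auto simp: sp_word_Suc)

lemma SPmap_empty [simp]: "SPmap e h {#} = {#}"
  by (simp add: SPmap_def)

lemma SPmap_add [simp]: "SPmap e h (M + N) = SPmap e h M + SPmap e h N"
  by (simp add: SPmap_def)

lemma SPmap_add_mset:
  "SPmap e h (add_mset x M) = (if h x = e then SPmap e h M else add_mset (h x) (SPmap e h M))"
  by (simp add: SPmap_def)

lemma SPmap_sp_word: "h e = e' \<Longrightarrow> SPmap e' h (sp_word e n u) = sp_word e' n (h \<circ> u)"
  by (induct n) (auto simp: sp_word_Suc SPmap_add_mset SPmap_def)

lemma sp_ext_SPmap: "\<alpha> e = {#} \<Longrightarrow> sp_ext \<alpha> (SPmap e h M) = sp_ext (\<alpha> \<circ> h) M"
  by (induct M) (auto simp: SPmap_add_mset SPmap_def)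

lemma SPmap_sp_ext: "SPmap e h (sp_ext \<alpha> M) = sp_ext (\<lambda>x. SPmap e h (\<alpha> x)) M"
  by (induct M) (simp_all add: SPmap_def)

lemma SPmap_const: "SPmap e (\<lambda>_. e) M = {#}"
  by (induct M) (auto simp: SPmap_add_mset SPmap_def)

lemma mset_eq_if_filter_eq:
  assumes "filter_mset (\<lambda>x. x \<noteq> e) A = filter_mset (\<lambda>x. x \<noteq> e) B" "size A = size B"
  shows "A = B"
proof -
  have split: "C = filter_mset (\<lambda>x. x \<noteq> e) C + replicate_mset (count C e) e" for C :: "'a multiset"
    by (auto simp: multiset_eq_iff)
  then have "size C = size (filter_mset (\<lambda>x. x \<noteq> e) C) + count C e" for C :: "'a multiset"
    by (metis size_replicate_mset size_union)
  then have "count A e = count B e" using assms by (metis add_left_cancel)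
  then show ?thesis using split[of A] split[of B] assms(1) by metis
qed

lemma sp_word_permute:
  assumes "p permutes {..<N}"
  shows "sp_word e N (\<lambda>i. u (p i)) = sp_word e N u"
proof -
  have "map (\<lambda>i. u (p i)) [0..<N] = permute_list p (map u [0..<N])"
    using permutes_in_image[OF assms] assms by (intro nth_equalityI) (auto simp: permute_list_nth)
  then show ?thesis
    using assms by (simp add: sp_word_def mset_permute_list)
qed

lemma sp_word_eq_iff_permutes:
  "sp_word e N u = sp_word e N v \<longleftrightarrow> (\<exists>p. p permutes {..<N} \<and> (\<forall>i<N. v i = u (p i)))"
proof
  assume eq: "sp_word e N u = sp_word e N v"
  have "mset (map v [0..<N]) = mset (map u [0..<N])"
  proof (rule mset_eq_if_filter_eq[of e])
    show "filter_mset (\<lambda>x. x \<noteq> e) (mset (map v [0..<N])) = filter_mset (\<lambda>x. x \<noteq> e) (mset (map u [0..<N]))"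
      using eq unfolding sp_word_def by (rule sym)
  qed simp
  then obtain p where "p permutes {..<length (map u [0..<N])}" "permute_list p (map u [0..<N]) = map v [0..<N]"
    by (rule mset_eq_permutation)
  then have p: "p permutes {..<N}" "permute_list p (map u [0..<N]) = map v [0..<N]"
    by simp_all
  have "v i = u (p i)" if "i < N" for i
  proof -
    have "v i = map v [0..<N] ! i" using that by simp
    also have "\<dots> = u (p i)"
      unfolding p(2)[symmetric] using that p(1) permutes_in_image[OF p(1)] by (simp add: permute_list_nth)
    finally show ?thesis .
  qed
  with p(1) show "\<exists>p. p permutes {..<N} \<and> (\<forall>i<N. v i = u (p i))" by blast
next
  assume "\<exists>p. p permutes {..<N} \<and> (\<forall>i<N. v i = u (p i))"
  then obtain p where p: "p permutes {..<N}" "\<And>i. i < N \<Longrightarrow> v i = u (p i)" by blast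
  have "sp_word e N u = sp_word e N (\<lambda>i. u (p i))" by (rule sp_word_permute[OF p(1), symmetric])
  also have "\<dots> = sp_word e N v" by (rule sp_word_cong) (simp add: p(2))
  finally show "sp_word e N u = sp_word e N v" .
qed

lemma sp_word_pad: "m \<le> N \<Longrightarrow> sp_word e N (\<lambda>i. if i < m then u i else e) = sp_word e m u"
proof (induct N)
  case (Suc N)
  show ?case
  proof (cases "m = Suc N")
    case True
    have "sp_word e (Suc N) (\<lambda>i. if i < m then u i else e) = sp_word e (Suc N) u"
      by (rule sp_word_cong) (use True in auto)
    then show ?thesis using True by simp
  next
    case False
    then show ?thesis using Suc by (simp add: sp_word_Suc)
  qed
qed simp

lemma sp_word_append:
  "sp_word e (a + b) (\<lambda>i. if i < a then u i else v (i - a)) = sp_word e a u + sp_word e b v"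
proof (induct b)
  case 0
  show ?case by (simp, rule sp_word_cong) auto
next
  case (Suc b)
  then show ?case by (simp add: sp_word_Suc add.assoc)
qed

lemma closedin_SP:
  "closedin (SP X e) T \<longleftrightarrow> T \<subseteq> sp_carrier X e \<and>
      (\<forall>n\<ge>1. closedin (powertop X n) {u \<in> topspace (powertop X n). sp_word e n u \<in> T})"
proof -
  have "{u \<in> topspace (powertop X n). sp_word e n u \<in> sp_carrier X e - T} =
        topspace (powertop X n) - {u \<in> topspace (powertop X n). sp_word e n u \<in> T}" for n
    using sp_word_in_sp_carrier by fastforce
  then show ?thesis
    by (auto simp: closedin_def openin_SP)
qed

lemma continuous_map_padded_coordinate:
  "e \<in> topspace X \<Longrightarrow> continuous_map (powertop X n) X (\<lambda>u. if i < n then u i else e)"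
  using continuous_map_product_projection[of i "{..<n}" "\<lambda>_. X"]
  by (cases "i < n") (simp_all add: continuous_map_const)

text \<open>Two padded words have the same image in SP(X) iff they differ by one of finitely many
  permutations of the coordinates, so this relation is a finite union of equalisers.\<close>

lemma closedin_sp_word_eq:
  assumes X: "Hausdorff_space X" and e: "e \<in> topspace X"
  shows "closedin (prod_topology (powertop X m) (powertop X k))
           {w \<in> topspace (prod_topology (powertop X m) (powertop X k)). sp_word e m (fst w) = sp_word e k (snd w)}"
proof -
  define N where "N = m + k"
  define pad where "pad n u = (\<lambda>i. if i < n then u i else e)" for n and u :: "nat \<Rightarrow> 'a"
  let ?P = "prod_topology (powertop X m) (powertop X k)"
  define F where "F p w = restrict (\<lambda>i. pad m (fst w) (p i)) {..<N}"
    for p :: "nat \<Rightarrow> nat" and w :: "(nat \<Rightarrow> 'a) \<times> (nat \<Rightarrow> 'a)"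
  define G where "G w = restrict (pad k (snd w)) {..<N}" for w :: "(nat \<Rightarrow> 'a) \<times> (nat \<Rightarrow> 'a)"
  have pad: "continuous_map (powertop X n) X (\<lambda>u. pad n u i)" for n i
    unfolding pad_def using e by (rule continuous_map_padded_coordinate)
  have "continuous_map ?P (powertop X N) (F p)" for p
    unfolding F_def continuous_map_componentwise
    using continuous_map_compose[OF continuous_map_fst pad] by (auto simp: o_def)
  moreover have "continuous_map ?P (powertop X N) G"
    unfolding G_def continuous_map_componentwise
    using continuous_map_compose[OF continuous_map_snd pad] by (auto simp: o_def)
  moreover have "Hausdorff_space (powertop X N)"
    using X by (simp add: Hausdorff_space_product_topology)
  ultimately have closed: "closedin ?P {w \<in> topspace ?P. F p w = G w}" for p
    by (blast intro: closedin_continuous_maps_eq)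
  moreover have "sp_word e m u = sp_word e k v \<longleftrightarrow> (\<exists>p. p permutes {..<N} \<and> F p (u,v) = G (u,v))" for u v
  proof -
    have FG: "(\<forall>i<N. pad k v i = pad m u (p i)) \<longleftrightarrow> F p (u,v) = G (u,v)" for p
      unfolding F_def G_def restrict_def fun_eq_iff by auto
    have "sp_word e m u = sp_word e k v \<longleftrightarrow> sp_word e N (pad m u) = sp_word e N (pad k v)"
      unfolding pad_def N_def by (simp add: sp_word_pad)
    also have "\<dots> \<longleftrightarrow> (\<exists>p. p permutes {..<N} \<and> (\<forall>i<N. pad k v i = pad m u (p i)))"
      by (rule sp_word_eq_iff_permutes)
    finally show ?thesis by (simp only: FG)
  qed
  then have eq: "{w \<in> topspace ?P. sp_word e m (fst w) = sp_word e k (snd w)} =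
      (\<Union>p\<in>{p. p permutes {..<N}}. {w \<in> topspace ?P. F p w = G w})"
    by auto
  show ?thesis
    unfolding eq using closed finite_permutations by (intro closedin_Union) auto
qed

lemma closedin_SP_sp_word_image:
  assumes X: "Hausdorff_space X" "compact_space X" and e: "e \<in> topspace X"
    and C: "closedin (powertop X k) C"
  shows "closedin (SP X e) (sp_word e k ` C)"
  unfolding closedin_SP
proof (intro conjI allI impI)
  have Csub: "C \<subseteq> topspace (powertop X k)" using C by (rule closedin_subset)
  then show "sp_word e k ` C \<subseteq> sp_carrier X e"
    by (intro image_subsetI sp_word_in_sp_carrier) blast
  fix m :: nat
  let ?P = "prod_topology (powertop X m) (powertop X k)"
  define R where "R = {w \<in> topspace ?P. sp_word e m (fst w) = sp_word e k (snd w)} \<inter> topspace (powertop X m) \<times> C"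
  have "closedin ?P R"
    unfolding R_def using C by (intro closedin_Int closedin_sp_word_eq[OF X(1) e]) (simp add: closedin_prod_Times_iff del: topspace_product_topology)
  moreover have "compact_space ?P"
    using X by (simp add: compact_space_prod_topology compact_space_product_topology)
  ultimately have "compactin (powertop X m) (fst ` R)"
    using closedin_compact_space continuous_map_fst image_compactin by blast
  then have "closedin (powertop X m) (fst ` R)"
    using X(1) by (simp add: compactin_imp_closedin Hausdorff_space_product_topology)
  moreover have "fst ` R = {v \<in> topspace (powertop X m). sp_word e m v \<in> sp_word e k ` C}"
  proof
    show "fst ` R \<subseteq> {v \<in> topspace (powertop X m). sp_word e m v \<in> sp_word e k ` C}"
    proof (rule image_subsetI)
      fix w assume "w \<in> R"
      then have "fst w \<in> topspace (powertop X m)" "snd w \<in> C" "sp_word e m (fst w) = sp_word e k (snd w)"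
        unfolding R_def by auto
      then show "fst w \<in> {v \<in> topspace (powertop X m). sp_word e m v \<in> sp_word e k ` C}"
        by simp
    qed
    show "{v \<in> topspace (powertop X m). sp_word e m v \<in> sp_word e k ` C} \<subseteq> fst ` R"
    proof
      fix v assume "v \<in> {v \<in> topspace (powertop X m). sp_word e m v \<in> sp_word e k ` C}"
      then obtain u where "v \<in> topspace (powertop X m)" "u \<in> C" "sp_word e m v = sp_word e k u"
        by blast
      then have "(v, u) \<in> R" using Csub unfolding R_def by auto
      then show "v \<in> fst ` R" by (rule rev_image_eqI) simp
    qed
  qed
  ultimately show "closedin (powertop X m) {v \<in> topspace (powertop X m). sp_word e m v \<in> sp_word e k ` C}"
    by simp
qed

section \<open>Products of k\<omega>-filtered spaces\<close>

text \<open>A k\<omega>-filtration exhibits Y as the colimit of an increasing sequence of compact Hausdorff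
  closed subspaces. Products of two such colimits again carry the colimit topology, which is what
  makes addition on SP(X) continuous although SP(X) \<times> SP(X) is not a quotient of the products
  of the X^n in general.\<close>

definition komega_filtration :: "'a topology \<Rightarrow> (nat \<Rightarrow> 'a set) \<Rightarrow> bool" where
  "komega_filtration Y S \<longleftrightarrow> incseq S \<and> topspace Y = (\<Union>k. S k) \<and>
     (\<forall>k. closedin Y (S k) \<and> compact_space (subtopology Y (S k)) \<and> Hausdorff_space (subtopology Y (S k))) \<and>
     (\<forall>U. U \<subseteq> topspace Y \<and> (\<forall>k. openin (subtopology Y (S k)) (U \<inter> S k)) \<longrightarrow> openin Y U)"

lemma compact_rectangle_shrink:
  assumes Z: "compact_space Z1" "Hausdorff_space Z1" "compact_space Z2" "Hausdorff_space Z2"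
    and KL: "closedin Z1 K" "closedin Z2 L" "openin (prod_topology Z1 Z2) W" "K \<times> L \<subseteq> W"
  obtains O1 O2 where "openin Z1 O1" "openin Z2 O2" "K \<subseteq> O1" "L \<subseteq> O2"
    "(Z1 closure_of O1) \<times> (Z2 closure_of O2) \<subseteq> W"
proof -
  obtain U V where UV: "openin Z1 U" "openin Z2 V" "K \<subseteq> U" "L \<subseteq> V" "U \<times> V \<subseteq> W"
    using Wallace_theorem_prod_topology[OF closedin_compact_space[OF Z(1) KL(1)]
        closedin_compact_space[OF Z(3) KL(2)] KL(3) KL(4)] by blast
  have "normal_space Z1" "normal_space Z2"
    using Z compact_Hausdorff_or_regular_imp_normal_space by blast+
  then have "\<exists>O1. openin Z1 O1 \<and> K \<subseteq> O1 \<and> Z1 closure_of O1 \<subseteq> U"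
    "\<exists>O2. openin Z2 O2 \<and> L \<subseteq> O2 \<and> Z2 closure_of O2 \<subseteq> V"
    using KL(1,2) UV(1-4) unfolding normal_space_alt by simp_all
  then obtain O1 O2 where "openin Z1 O1" "K \<subseteq> O1" "Z1 closure_of O1 \<subseteq> U"
    "openin Z2 O2" "L \<subseteq> O2" "Z2 closure_of O2 \<subseteq> V"
    by blast
  with UV(5) show ?thesis by (intro that) auto
qed

lemma komega_filtration_openin_Union:
  assumes Y: "komega_filtration Y S"
    and V: "\<And>i. openin (subtopology Y (S (j + i))) (V i)" "incseq V"
  shows "openin Y (\<Union>i. V i)"
proof -
  have S: "incseq S"
    and coherent: "\<And>U. U \<subseteq> topspace Y \<Longrightarrow> (\<And>k. openin (subtopology Y (S k)) (U \<inter> S k)) \<Longrightarrow> openin Y U"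
    using Y unfolding komega_filtration_def by blast+
  show ?thesis
  proof (rule coherent)
    show "(\<Union>i. V i) \<subseteq> topspace Y"
      using openin_subset[OF V(1)] by auto
  next
    fix k
    have opens: "openin (subtopology Y (S k)) (V (i + k) \<inter> S k)" for i
    proof -
      obtain T where T: "openin Y T" "V (i + k) = T \<inter> S (j + (i + k))"
        using V(1)[of "i + k"] by (auto simp: openin_subtopology)
      have "S k \<subseteq> S (j + (i + k))" using S by (simp add: monoD)
      then have "V (i + k) \<inter> S k = T \<inter> S k" using T(2) by blast
      then show ?thesis
        unfolding openin_subtopology using T(1) by blast
    qed
    have "(\<Union>i. V i) \<inter> S k = (\<Union>i. V (i + k) \<inter> S k)"
    proof
      show "(\<Union>i. V i) \<inter> S k \<subseteq> (\<Union>i. V (i + k) \<inter> S k)"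
      proof
        fix x assume "x \<in> (\<Union>i. V i) \<inter> S k"
        then obtain i where "x \<in> V i" "x \<in> S k" by blast
        moreover have "V i \<subseteq> V (i + k)" using V(2) by (simp add: monoD)
        ultimately show "x \<in> (\<Union>i. V (i + k) \<inter> S k)" by blast
      qed
    qed blast
    then show "openin (subtopology Y (S k)) ((\<Union>i. V i) \<inter> S k)"
      by (metis (no_types, lifting) opens openin_Union rangeE)
  qed
qed

lemma komega_filtrationD:
  assumes "komega_filtration Y S"
  shows "incseq S" "topspace Y = (\<Union>k. S k)" "closedin Y (S k)"
    "compact_space (subtopology Y (S k))" "Hausdorff_space (subtopology Y (S k))"
  using assms by (simp_all add: komega_filtration_def)

text \<open>The classical argument: around a point of W, grow compact rectangles K \<times> L \<subseteq> W stage by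
  stage, each contained in the interior (relative to the next stage) of its successor; the
  unions of these interiors form an open rectangle inside W.\<close>

lemma openin_prod_komega_filtration:
  assumes Y1: "komega_filtration Y1 S" and Y2: "komega_filtration Y2 T"
    and W: "W \<subseteq> topspace Y1 \<times> topspace Y2"
      "\<And>k. openin (prod_topology (subtopology Y1 (S k)) (subtopology Y2 (T k))) (W \<inter> S k \<times> T k)"
  shows "openin (prod_topology Y1 Y2) W"
proof (subst openin_subopen, intro ballI)
  fix z assume "z \<in> W"
  then obtain x y where z: "z = (x, y)" "x \<in> topspace Y1" "y \<in> topspace Y2" "(x, y) \<in> W"
    using W(1) by auto
  note S = komega_filtrationD[OF Y1] and T = komega_filtrationD[OF Y2]
  obtain j where j: "x \<in> S j" "y \<in> T j"
  proof -
    obtain a b where "x \<in> S a" "y \<in> T b" using z S(2) T(2) by blast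
    then show ?thesis
      using monoD[OF S(1), of a "max a b"] monoD[OF T(1), of b "max a b"] that by auto
  qed
  define P where "P n KL \<longleftrightarrow> x \<in> fst KL \<and> y \<in> snd KL \<and> closedin Y1 (fst KL) \<and> closedin Y2 (snd KL)
      \<and> fst KL \<subseteq> S (j + n) \<and> snd KL \<subseteq> T (j + n) \<and> fst KL \<times> snd KL \<subseteq> W" for n KL
  define Q where "Q n KL KL' \<longleftrightarrow> (\<exists>O1 O2. openin (subtopology Y1 (S (j + Suc n))) O1
      \<and> openin (subtopology Y2 (T (j + Suc n))) O2
      \<and> fst KL \<subseteq> O1 \<and> O1 \<subseteq> fst KL' \<and> snd KL \<subseteq> O2 \<and> O2 \<subseteq> snd KL')" for n KL KL'
  have "P 0 ({x}, {y})"
  proof -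
    have "t1_space (subtopology Y1 (S j))" "t1_space (subtopology Y2 (T j))"
      using S(5) T(5) by (simp_all add: Hausdorff_imp_t1_space)
    then have "closedin (subtopology Y1 (S j)) {x}" "closedin (subtopology Y2 (T j)) {y}"
      using j z by (simp_all add: t1_space_closedin_singleton)
    then have "closedin Y1 {x}" "closedin Y2 {y}"
      using closedin_trans_full S(3) T(3) by blast+
    then show ?thesis
      using j z by (simp add: P_def)
  qed
  moreover have "\<exists>KL'. P (Suc n) KL' \<and> Q n KL KL'" if "P n KL" for n KL
  proof -
    let ?Z1 = "subtopology Y1 (S (j + Suc n))" and ?Z2 = "subtopology Y2 (T (j + Suc n))"
    have "S (j + n) \<subseteq> S (j + Suc n)" "T (j + n) \<subseteq> T (j + Suc n)"
      using S(1) T(1) by (simp_all add: monoD)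
    then have "closedin ?Z1 (fst KL)" "closedin ?Z2 (snd KL)"
      "fst KL \<times> snd KL \<subseteq> W \<inter> S (j + Suc n) \<times> T (j + Suc n)"
      using that by (auto simp: P_def closedin_subset_topspace)
    then obtain O1 O2 where O: "openin ?Z1 O1" "openin ?Z2 O2" "fst KL \<subseteq> O1" "snd KL \<subseteq> O2"
      "(?Z1 closure_of O1) \<times> (?Z2 closure_of O2) \<subseteq> W \<inter> S (j + Suc n) \<times> T (j + Suc n)"
      using compact_rectangle_shrink[OF S(4) S(5) T(4) T(5)] W(2) by metis
    have "P (Suc n) (?Z1 closure_of O1, ?Z2 closure_of O2)"
      using O that closure_of_subset[OF openin_subset[OF O(1)]] closure_of_subset[OF openin_subset[OF O(2)]]
        closedin_trans_full[OF closedin_closure_of S(3)] closedin_trans_full[OF closedin_closure_of T(3)]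
        closure_of_subset_topspace[of ?Z1 O1] closure_of_subset_topspace[of ?Z2 O2]
      unfolding P_def by auto
    moreover have "Q n KL (?Z1 closure_of O1, ?Z2 closure_of O2)"
      unfolding Q_def using O closure_of_subset[OF openin_subset[OF O(1)]] closure_of_subset[OF openin_subset[OF O(2)]]
      by auto
    ultimately show ?thesis by blast
  qed
  ultimately obtain KL where KL: "\<And>n. P n (KL n)" "\<And>n. Q n (KL n) (KL (Suc n))"
    using dependent_nat_choice[of P Q] by blast
  have "\<forall>n. \<exists>O1. \<exists>O2. openin (subtopology Y1 (S (Suc j + n))) O1 \<and> openin (subtopology Y2 (T (Suc j + n))) O2
      \<and> fst (KL n) \<subseteq> O1 \<and> O1 \<subseteq> fst (KL (Suc n)) \<and> snd (KL n) \<subseteq> O2 \<and> O2 \<subseteq> snd (KL (Suc n))"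
    using KL(2) by (simp add: Q_def)
  then obtain O1 O2 where O: "\<And>n. openin (subtopology Y1 (S (Suc j + n))) (O1 n)"
    "\<And>n. openin (subtopology Y2 (T (Suc j + n))) (O2 n)"
    "\<And>n. fst (KL n) \<subseteq> O1 n" "\<And>n. O1 n \<subseteq> fst (KL (Suc n))"
    "\<And>n. snd (KL n) \<subseteq> O2 n" "\<And>n. O2 n \<subseteq> snd (KL (Suc n))"
    by metis
  have "incseq O1"
    by (rule incseq_SucI) (use O(3,4) in blast)
  moreover have "incseq O2"
    by (rule incseq_SucI) (use O(5,6) in blast)
  ultimately have "openin Y1 (\<Union>n. O1 n)" "openin Y2 (\<Union>n. O2 n)"
    using komega_filtration_openin_Union[OF Y1 O(1)] komega_filtration_openin_Union[OF Y2 O(2)] by blast+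
  then have "openin (prod_topology Y1 Y2) ((\<Union>n. O1 n) \<times> (\<Union>n. O2 n))"
    by (simp add: openin_prod_Times_iff)
  moreover have "z \<in> (\<Union>n. O1 n) \<times> (\<Union>n. O2 n)"
    using KL(1)[of 0] O(3)[of 0] O(5)[of 0] z(1) by (auto simp: P_def)
  moreover have "(\<Union>n. O1 n) \<times> (\<Union>n. O2 n) \<subseteq> W"
  proof clarify
    fix a b p q assume "a \<in> O1 p" "b \<in> O2 q"
    then have "a \<in> fst (KL (Suc (max p q)))" "b \<in> snd (KL (Suc (max p q)))"
      using monoD[OF \<open>incseq O1\<close>, of p "max p q"] monoD[OF \<open>incseq O2\<close>, of q "max p q"]
        O(4)[of "max p q"] O(6)[of "max p q"] by auto
    then show "(a, b) \<in> W" using KL(1) unfolding P_def by blast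
  qed
  ultimately show "\<exists>U. openin (prod_topology Y1 Y2) U \<and> z \<in> U \<and> U \<subseteq> W" by blast
qed

section \<open>Continuity of addition on SP(X)\<close>

definition sp_stage :: "'a topology \<Rightarrow> 'a \<Rightarrow> nat \<Rightarrow> 'a multiset set" where
  "sp_stage X e k = sp_word e k ` topspace (powertop X k)"

lemma sp_stage_subset: "sp_stage X e k \<subseteq> sp_carrier X e"
  unfolding sp_stage_def by (intro image_subsetI sp_word_in_sp_carrier)

lemma topspace_subtopology_sp_stage [simp]:
  "topspace (subtopology (SP X e) (sp_stage X e k)) = sp_stage X e k"
  using sp_stage_subset[of X e k] by auto

lemma sp_stage_mono:
  assumes e: "e \<in> topspace X" and k: "k \<le> k'"
  shows "sp_stage X e k \<subseteq> sp_stage X e k'"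
proof
  fix M assume "M \<in> sp_stage X e k"
  then obtain u where u: "u \<in> topspace (powertop X k)" "M = sp_word e k u"
    by (auto simp: sp_stage_def)
  define v where "v = (\<lambda>i. if i < k then u i else if i < k' then e else undefined)"
  have "sp_word e k' v = sp_word e k' (\<lambda>i. if i < k then u i else e)"
    by (rule sp_word_cong) (simp add: v_def)
  then have "sp_word e k' v = M"
    using sp_word_pad[OF k, of e u] u by simp
  moreover have "v \<in> topspace (powertop X k')"
    using u e k by (auto simp: v_def PiE_iff extensional_def)
  ultimately show "M \<in> sp_stage X e k'"
    unfolding sp_stage_def by blast
qed

lemma sp_carrier_eq_Union_sp_stage:
  assumes e: "e \<in> topspace X"
  shows "sp_carrier X e = (\<Union>k. sp_stage X e k)"
proof
  show "sp_carrier X e \<subseteq> (\<Union>k. sp_stage X e k)"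
  proof
    fix M assume M: "M \<in> sp_carrier X e"
    obtain u where u: "u \<in> topspace (powertop X (size M))" "sp_word e (size M) u = M"
      using sp_word_surjective[OF M e order_refl] .
    have "M \<in> sp_stage X e (size M)"
      unfolding sp_stage_def using image_eqI[where f = "sp_word e (size M)", OF u(2)[symmetric] u(1)] .
    then show "M \<in> (\<Union>k. sp_stage X e k)" by (rule UN_I[OF UNIV_I])
  qed
  show "(\<Union>k. sp_stage X e k) \<subseteq> sp_carrier X e"
    by (simp add: UN_subset_iff sp_stage_subset)
qed

lemma openin_SP_if_openin_sp_stage:
  assumes U: "U \<subseteq> sp_carrier X e"
    and stages: "\<And>k. openin (subtopology (SP X e) (sp_stage X e k)) (U \<inter> sp_stage X e k)"
  shows "openin (SP X e) U"
  unfolding openin_SP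
proof (intro conjI allI impI U)
  fix n :: nat
  obtain T where T: "openin (SP X e) T" "U \<inter> sp_stage X e n = T \<inter> sp_stage X e n"
    using stages[of n] by (auto simp: openin_subtopology)
  have "{u \<in> topspace (powertop X n). sp_word e n u \<in> U} = {u \<in> topspace (powertop X n). sp_word e n u \<in> T}"
    using T(2) unfolding sp_stage_def by blast
  moreover assume "n \<ge> 1"
  ultimately show "openin (powertop X n) {u \<in> topspace (powertop X n). sp_word e n u \<in> U}"
    using T(1) by (simp add: openin_SP)
qed

lemma continuous_map_word_append:
  "continuous_map (prod_topology (powertop X k) (powertop X k)) (powertop X (k + k))
     (\<lambda>(u,v). \<lambda>i\<in>{..<k + k}. if i < k then u i else v (i - k))"
  unfolding continuous_map_componentwise
proof (intro conjI ballI)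
  fix i assume i: "i \<in> {..<k + k}"
  have "continuous_map (prod_topology (powertop X k) (powertop X k)) X (\<lambda>w. fst w i)" if "i < k"
    using continuous_map_compose[OF continuous_map_fst continuous_map_product_projection[of i "{..<k}" "\<lambda>_. X"]] that
    by (simp add: o_def)
  moreover have "continuous_map (prod_topology (powertop X k) (powertop X k)) X (\<lambda>w. snd w (i - k))" if "\<not> i < k"
    using continuous_map_compose[OF continuous_map_snd continuous_map_product_projection[of "i - k" "{..<k}" "\<lambda>_. X"],
        of "powertop X k"] that i
    by (simp add: o_def)
  ultimately show "continuous_map (prod_topology (powertop X k) (powertop X k)) X
      (\<lambda>w. ((\<lambda>(u,v). \<lambda>i\<in>{..<k + k}. if i < k then u i else v (i - k)) w) i)"
    using i by (cases "i < k") (simp_all add: case_prod_unfold)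
qed (auto simp: extensional_def)

context
  fixes X :: "'a topology" and e :: 'a
  assumes X: "Hausdorff_space X" "compact_space X" and e: "e \<in> topspace X"
begin

lemma compact_space_powertop: "compact_space (powertop X n)"
  using X by (simp add: compact_space_product_topology)

lemma Hausdorff_space_powertop: "Hausdorff_space (powertop X n)"
  using X by (simp add: Hausdorff_space_product_topology)

lemma continuous_map_sp_word_sp_stage:
  "continuous_map (powertop X k) (subtopology (SP X e) (sp_stage X e k)) (sp_word e k)"
  by (simp add: continuous_map_in_subtopology continuous_map_sp_word sp_stage_def)

lemma Hausdorff_space_sp_stage: "Hausdorff_space (subtopology (SP X e) (sp_stage X e k))"
proof -
  have "closed_map (powertop X k) (subtopology (SP X e) (sp_stage X e k)) (sp_word e k)"
    unfolding closed_map_def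
  proof (intro allI impI)
    fix C assume C: "closedin (powertop X k) C"
    then have "sp_word e k ` C \<subseteq> sp_stage X e k"
      using closedin_subset unfolding sp_stage_def by blast
    then show "closedin (subtopology (SP X e) (sp_stage X e k)) (sp_word e k ` C)"
      by (intro closedin_subset_topspace closedin_SP_sp_word_image[OF X e C])
  qed
  moreover have "normal_space (powertop X k)"
    using compact_Hausdorff_or_regular_imp_normal_space compact_space_powertop Hausdorff_space_powertop by blast
  moreover have "sp_word e k ` topspace (powertop X k) = topspace (subtopology (SP X e) (sp_stage X e k))"
    unfolding topspace_subtopology_sp_stage by (simp only: sp_stage_def)
  ultimately show ?thesis
    using normal_Hausdorff_space_closed_continuous_map_image Hausdorff_space_powertop
      continuous_map_sp_word_sp_stage by blast
qed

lemma compact_space_sp_stage: "compact_space (subtopology (SP X e) (sp_stage X e k))"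
proof -
  have "compactin (SP X e) (sp_stage X e k)"
    unfolding sp_stage_def using compact_space_powertop[unfolded compact_space_def]
    by (rule image_compactin[OF _ continuous_map_sp_word])
  then show ?thesis by (rule compact_space_subtopology)
qed

lemma komega_filtration_SP: "komega_filtration (SP X e) (sp_stage X e)"
  unfolding komega_filtration_def
proof (intro conjI allI impI)
  show "incseq (sp_stage X e)"
    using sp_stage_mono[OF e] by (simp add: incseq_def)
  show "topspace (SP X e) = (\<Union>k. sp_stage X e k)"
    using sp_carrier_eq_Union_sp_stage[OF e] by simp
  show "closedin (SP X e) (sp_stage X e k)" for k
    unfolding sp_stage_def by (rule closedin_SP_sp_word_image[OF X e closedin_topspace])
  show "compact_space (subtopology (SP X e) (sp_stage X e k))" for k
    by (rule compact_space_sp_stage)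
  show "Hausdorff_space (subtopology (SP X e) (sp_stage X e k))" for k
    by (rule Hausdorff_space_sp_stage)
  show "openin (SP X e) U"
    if "U \<subseteq> topspace (SP X e) \<and> (\<forall>k. openin (subtopology (SP X e) (sp_stage X e k)) (U \<inter> sp_stage X e k))" for U
    using that openin_SP_if_openin_sp_stage[of U X e] by simp
qed

lemma openin_sp_stage_plus_preimage:
  assumes U: "openin (SP X e) U"
  shows "openin (prod_topology (subtopology (SP X e) (sp_stage X e k)) (subtopology (SP X e) (sp_stage X e k)))
           ({z \<in> sp_carrier X e \<times> sp_carrier X e. fst z + snd z \<in> U} \<inter> sp_stage X e k \<times> sp_stage X e k)"
    (is "openin ?S ?W")
proof -
  let ?P = "prod_topology (powertop X k) (powertop X k)"
  let ?q = "\<lambda>(u,v). (sp_word e k u, sp_word e k v)"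
  have "continuous_map ?P ?S ?q"
    using continuous_map_sp_word_sp_stage by (simp add: continuous_map_prod_top)
  moreover have "closed_map ?P ?S ?q"
    using calculation by (rule continuous_imp_closed_map)
      (simp_all add: compact_space_prod_topology compact_space_powertop Hausdorff_space_prod_topology
        Hausdorff_space_sp_stage)
  moreover have "?q ` topspace ?P = topspace ?S"
    unfolding topspace_prod_topology topspace_subtopology_sp_stage image_paired_Times
    by (simp only: sp_stage_def)
  ultimately have "quotient_map ?P ?S ?q"
    by (rule continuous_closed_imp_quotient_map)
  moreover have "?W \<subseteq> topspace ?S"
    by auto
  moreover have "openin ?P {w \<in> topspace ?P. ?q w \<in> ?W}"
  proof -
    let ?append = "\<lambda>(u,v). \<lambda>i\<in>{..<k + k}. if i < k then u i else v (i - k)"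
    have "sp_word e (k + k) (?append w) = sp_word e k (fst w) + sp_word e k (snd w)" for w
    proof -
      have "sp_word e (k + k) (?append w) = sp_word e (k + k) (\<lambda>i. if i < k then fst w i else snd w (i - k))"
        by (rule sp_word_cong) (simp add: case_prod_unfold)
      then show ?thesis by (simp add: sp_word_append)
    qed
    then have eq: "{w \<in> topspace ?P. ?q w \<in> ?W} = {w \<in> topspace ?P. (sp_word e (k + k) \<circ> ?append) w \<in> U}"
      by (auto simp: sp_stage_def sp_word_in_sp_carrier case_prod_unfold)
    have "continuous_map ?P (SP X e) (sp_word e (k + k) \<circ> ?append)"
      by (rule continuous_map_compose[OF continuous_map_word_append continuous_map_sp_word])
    then show ?thesis
      unfolding eq using U by (rule openin_continuous_map_preimage)
  qed
  ultimately show ?thesis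
    unfolding quotient_map_def by blast
qed

lemma continuous_map_SP_plus: "continuous_map (prod_topology (SP X e) (SP X e)) (SP X e) (\<lambda>z. fst z + snd z)"
  unfolding continuous_map_def
proof (intro conjI allI impI)
  show "(\<lambda>z. fst z + snd z) \<in> topspace (prod_topology (SP X e) (SP X e)) \<rightarrow> topspace (SP X e)"
    by (auto intro: add_in_sp_carrier)
  fix U assume "openin (SP X e) U"
  then have "openin (prod_topology (SP X e) (SP X e)) {z \<in> sp_carrier X e \<times> sp_carrier X e. fst z + snd z \<in> U}"
    by (intro openin_prod_komega_filtration[OF komega_filtration_SP komega_filtration_SP]
        openin_sp_stage_plus_preimage) auto
  then show "openin (prod_topology (SP X e) (SP X e))
      {z \<in> topspace (prod_topology (SP X e) (SP X e)). fst z + snd z \<in> U}"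
    by simp
qed

end

lemma continuous_map_SP_add:
  assumes "Hausdorff_space X" "compact_space X" "e \<in> topspace X"
    and "continuous_map Y (SP X e) f" "continuous_map Y (SP X e) g"
  shows "continuous_map Y (SP X e) (\<lambda>y. f y + g y)"
  using continuous_map_compose[OF continuous_map_pairedI[OF assms(4,5)] continuous_map_SP_plus[OF assms(1-3)]]
  by (simp add: o_def)

lemma continuous_map_SP_sum:
  assumes "Hausdorff_space X" "compact_space X" "e \<in> topspace X"
    and "\<And>i. i \<in> A \<Longrightarrow> continuous_map Y (SP X e) (f i)"
  shows "continuous_map Y (SP X e) (\<lambda>y. \<Sum>i\<in>A. f i y)"
  using assms(4)
proof (induct A rule: infinite_finite_induct)
  case (insert i A)
  then show ?case by (simp add: continuous_map_SP_add[OF assms(1-3)])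
qed (simp_all add: continuous_map_const)

section \<open>Spheres\<close>

definition cube_interior :: "nat \<Rightarrow> (nat \<Rightarrow> real) set" where
  "cube_interior n = {u \<in> topspace (cube_top n). \<forall>i<n. 0 < u i \<and> u i < 1}"

lemma topspace_cube_top: "topspace (cube_top n) = PiE {..<n} (\<lambda>_. {0..1::real})"
  by (simp add: cube_top_def)

lemma cube_interior_subset: "cube_interior n \<subseteq> topspace (cube_top n)"
  by (auto simp: cube_interior_def)

lemma cube_q_eq:
  assumes "u \<in> topspace (cube_top n)"
  shows "cube_q n u = (if u \<in> cube_interior n then Some u else None)"
proof -
  have "\<forall>i<n. 0 \<le> u i \<and> u i \<le> 1" using assms by (auto simp: topspace_cube_top PiE_iff)
  then have "(\<exists>i<n. u i = 0 \<or> u i = 1) \<longleftrightarrow> u \<notin> cube_interior n"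
    using assms unfolding cube_interior_def by (auto simp: order_less_le)
  then show ?thesis by (simp add: cube_q_def)
qed

lemma istopology_sphere:
  "istopology (\<lambda>U. U \<subseteq> insert None (cube_q n ` topspace (cube_top n)) \<and>
      openin (cube_top n) {u \<in> topspace (cube_top n). cube_q n u \<in> U})"
proof -
  have int: "{u \<in> topspace (cube_top n). cube_q n u \<in> S \<inter> T} =
     {u \<in> topspace (cube_top n). cube_q n u \<in> S} \<inter> {u \<in> topspace (cube_top n). cube_q n u \<in> T}" for S T
    by blast
  have un: "{u \<in> topspace (cube_top n). cube_q n u \<in> \<Union>K} =
      \<Union>((\<lambda>S. {u \<in> topspace (cube_top n). cube_q n u \<in> S}) ` K)" for K by blast
  show ?thesis unfolding istopology_def int un
    by (auto intro!: openin_Int openin_Union)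
qed

lemma openin_sphere:
  "openin (sphere n) U \<longleftrightarrow> U \<subseteq> insert None (cube_q n ` topspace (cube_top n)) \<and>
      openin (cube_top n) {u \<in> topspace (cube_top n). cube_q n u \<in> U}"
  unfolding sphere_def topology_inverse'[OF istopology_sphere] by (rule refl)

lemma cube_q_image: "insert None (cube_q n ` topspace (cube_top n)) = insert None (Some ` cube_interior n)"
proof
  show "insert None (cube_q n ` topspace (cube_top n)) \<subseteq> insert None (Some ` cube_interior n)"
    using cube_q_eq by fastforce
  show "insert None (Some ` cube_interior n) \<subseteq> insert None (cube_q n ` topspace (cube_top n))"
  proof
    fix y assume "y \<in> insert None (Some ` cube_interior n)"
    then show "y \<in> insert None (cube_q n ` topspace (cube_top n))"
    proof
      assume "y \<in> Some ` cube_interior n"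
      then obtain u where "u \<in> cube_interior n" "y = Some u" by blast
      then have "y = cube_q n u" "u \<in> topspace (cube_top n)" using cube_interior_subset[of n] cube_q_eq[of u n] by auto
      then show ?thesis by blast
    qed simp
  qed
qed

lemma topspace_sphere: "topspace (sphere n) = insert None (Some ` cube_interior n)"
proof -
  have "openin (sphere n) (insert None (cube_q n ` topspace (cube_top n)))"
    unfolding openin_sphere
  proof
    have "{u \<in> topspace (cube_top n). cube_q n u \<in> insert None (cube_q n ` topspace (cube_top n))} = topspace (cube_top n)"
      by blast
    then show "openin (cube_top n) {u \<in> topspace (cube_top n). cube_q n u \<in> insert None (cube_q n ` topspace (cube_top n))}"
      by (simp only: openin_topspace)
  qed simp
  then have "insert None (cube_q n ` topspace (cube_top n)) \<subseteq> topspace (sphere n)"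
    by (rule openin_subset)
  moreover have "topspace (sphere n) \<subseteq> insert None (cube_q n ` topspace (cube_top n))"
    using openin_sphere[of n "topspace (sphere n)"] by simp
  ultimately show ?thesis using cube_q_image[of n] by (metis subset_antisym)
qed

lemma None_in_sphere [simp]: "None \<in> topspace (sphere n)"
  by (simp add: topspace_sphere)

lemma continuous_map_cube_q: "continuous_map (cube_top n) (sphere n) (cube_q n)"
  unfolding continuous_map_def
proof (intro conjI allI impI)
  show "cube_q n \<in> topspace (cube_top n) \<rightarrow> topspace (sphere n)"
    using cube_q_eq by (auto simp: topspace_sphere)
  fix U assume "openin (sphere n) U"
  then show "openin (cube_top n) {x \<in> topspace (cube_top n). cube_q n x \<in> U}"
    unfolding openin_sphere by blast
qed

lemma openin_sphere_Some:
  assumes "openin (cube_top n) O1" "O1 \<subseteq> cube_interior n"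
  shows "openin (sphere n) (Some ` O1)"
  unfolding openin_sphere
proof
  show "Some ` O1 \<subseteq> insert None (cube_q n ` topspace (cube_top n))"
    using assms(2) cube_q_image by blast
  have "{u \<in> topspace (cube_top n). cube_q n u \<in> Some ` O1} = O1"
  proof (intro equalityI subsetI)
    fix x assume "x \<in> {u \<in> topspace (cube_top n). cube_q n u \<in> Some ` O1}"
    then have x: "x \<in> topspace (cube_top n)" "cube_q n x \<in> Some ` O1" by auto
    then show "x \<in> O1" using cube_q_eq[OF x(1)] by (auto split: if_splits)
  next
    fix x assume "x \<in> O1"
    then have "x \<in> cube_interior n" "x \<in> topspace (cube_top n)" using assms(2) cube_interior_subset by auto
    then show "x \<in> {u \<in> topspace (cube_top n). cube_q n u \<in> Some ` O1}"
      using cube_q_eq[of x n] \<open>x \<in> O1\<close> by auto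
  qed
  then show "openin (cube_top n) {u \<in> topspace (cube_top n). cube_q n u \<in> Some ` O1}"
    using assms(1) by simp
qed

lemma openin_sphere_None:
  assumes "openin (cube_top n) O1" "topspace (cube_top n) - cube_interior n \<subseteq> O1"
  shows "openin (sphere n) (insert None (Some ` (O1 \<inter> cube_interior n)))"
  unfolding openin_sphere
proof
  show "insert None (Some ` (O1 \<inter> cube_interior n)) \<subseteq> insert None (cube_q n ` topspace (cube_top n))"
    using cube_q_image by blast
  have "{u \<in> topspace (cube_top n). cube_q n u \<in> insert None (Some ` (O1 \<inter> cube_interior n))} = O1"
  proof -
    have "O1 \<subseteq> topspace (cube_top n)" using assms(1) by (rule openin_subset)
    then show ?thesis using assms(2) cube_q_eq[of _ n] by (auto split: if_splits)
  qed
  then show "openin (cube_top n) {u \<in> topspace (cube_top n). cube_q n u \<in> insert None (Some ` (O1 \<inter> cube_interior n))}"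
    using assms(1) by simp
qed

lemma openin_cube_top_box:
  assumes "\<And>i. i < n \<Longrightarrow> open (S i)"
  shows "openin (cube_top n) {v \<in> topspace (cube_top n). \<forall>i<n. v i \<in> S i}"
proof -
  have eq: "{v \<in> topspace (cube_top n). \<forall>i<n. v i \<in> S i} = PiE {..<n} (\<lambda>i. {0..1} \<inter> S i)"
    by (auto simp add: topspace_cube_top PiE_def Pi_def)
  have "openin (product_topology (\<lambda>_. unitI) {..<n}) (PiE {..<n} (\<lambda>i. {0..1} \<inter> S i))"
    by (subst openin_PiE_gen) (use assms in \<open>auto intro!: openin_open_Int\<close>)
  then show ?thesis unfolding eq by (simp add: cube_top_def)
qed

lemma openin_cube_top_coordinate:
  assumes "j < n" "open T"
  shows "openin (cube_top n) {v \<in> topspace (cube_top n). v j \<in> T}"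
proof -
  have "{v \<in> topspace (cube_top n). v j \<in> T} = {v \<in> topspace (cube_top n). \<forall>i<n. v i \<in> (if i = j then T else UNIV)}"
    using assms by auto
  then show ?thesis using assms by (simp add: openin_cube_top_box)
qed

lemma openin_cube_interior: "openin (cube_top n) (cube_interior n)"
proof -
  have "cube_interior n = {v \<in> topspace (cube_top n). \<forall>i<n. v i \<in> {0<..<1}}"
    by (auto simp: cube_interior_def)
  then show ?thesis using openin_cube_top_box[of n "\<lambda>_. {0<..<1}"] by simp
qed

lemma cube_interior_separated_from_boundary:
  assumes u: "u \<in> cube_interior n"
  obtains B1 B2 where "openin (cube_top n) B1" "openin (cube_top n) B2" "u \<in> B1" "B1 \<subseteq> cube_interior n"
    "topspace (cube_top n) - cube_interior n \<subseteq> B2" "B1 \<inter> B2 = {}"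
proof -
  define \<delta> where "\<delta> = Min (insert 1 ((\<lambda>j. min (u j) (1 - u j)) ` {..<n})) / 2"
  have pos: "\<delta> > 0"
    using u by (auto simp: \<delta>_def cube_interior_def)
  have le: "2 * \<delta> \<le> u j \<and> 2 * \<delta> \<le> 1 - u j" if "j < n" for j
  proof -
    have "Min (insert 1 ((\<lambda>j. min (u j) (1 - u j)) ` {..<n})) \<le> min (u j) (1 - u j)"
      using that by (intro Min_le) auto
    then show ?thesis by (simp add: \<delta>_def)
  qed
  define B1 where "B1 = {v \<in> topspace (cube_top n). \<forall>j<n. v j \<in> {u j - \<delta><..<u j + \<delta>}}"
  define B2 where "B2 = (\<Union>j\<in>{..<n}. {v \<in> topspace (cube_top n). v j \<in> {..<\<delta>} \<union> {1 - \<delta><..}})"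
  show ?thesis
  proof
    show "openin (cube_top n) B1" unfolding B1_def by (rule openin_cube_top_box) auto
    have "openin (cube_top n) {v \<in> topspace (cube_top n). v j \<in> {..<\<delta>} \<union> {1 - \<delta><..}}" if "j < n" for j
      by (rule openin_cube_top_coordinate[OF that]) auto
    then show "openin (cube_top n) B2" unfolding B2_def
      by (intro openin_Union) blast
    show "u \<in> B1" using u pos cube_interior_subset by (auto simp: B1_def)
    show "B1 \<subseteq> cube_interior n"
      using le pos unfolding B1_def cube_interior_def by force
    show "topspace (cube_top n) - cube_interior n \<subseteq> B2"
    proof
      fix v assume v: "v \<in> topspace (cube_top n) - cube_interior n"
      then obtain j where "j < n" "\<not> (0 < v j \<and> v j < 1)" by (auto simp: cube_interior_def)
      moreover have "0 \<le> v j \<and> v j \<le> 1" using v \<open>j < n\<close> by (auto simp: topspace_cube_top PiE_iff)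
      ultimately have "v j < \<delta> \<or> v j > 1 - \<delta>" using pos by auto
      then show "v \<in> B2" using v \<open>j < n\<close> by (auto simp: B2_def)
    qed
    show "B1 \<inter> B2 = {}"
      using le by (fastforce simp: B1_def B2_def)
  qed
qed

lemma sphere_sep_None:
  assumes u: "u \<in> cube_interior n"
  shows "\<exists>U V. openin (sphere n) U \<and> openin (sphere n) V \<and> Some u \<in> U \<and> None \<in> V \<and> disjnt U V"
proof -
  obtain B1 B2 where B: "openin (cube_top n) B1" "openin (cube_top n) B2" "u \<in> B1" "B1 \<subseteq> cube_interior n"
    "topspace (cube_top n) - cube_interior n \<subseteq> B2" "B1 \<inter> B2 = {}"
    using cube_interior_separated_from_boundary[OF u] .
  show ?thesis
  proof (intro exI conjI)
    show "openin (sphere n) (Some ` B1)" by (rule openin_sphere_Some[OF B(1,4)])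
    show "openin (sphere n) (insert None (Some ` (B2 \<inter> cube_interior n)))"
      by (rule openin_sphere_None[OF B(2,5)])
    show "disjnt (Some ` B1) (insert None (Some ` (B2 \<inter> cube_interior n)))"
      using B(6) by (auto simp: disjnt_def)
  qed (use B(3) in auto)
qed

lemma sphere_sep_Some:
  assumes u: "u \<in> cube_interior n" and w: "w \<in> cube_interior n" and uw: "u \<noteq> w"
  shows "\<exists>U V. openin (sphere n) U \<and> openin (sphere n) V \<and> Some u \<in> U \<and> Some w \<in> V \<and> disjnt U V"
proof -
  have "u \<in> PiE {..<n} (\<lambda>_. {0..1})" "w \<in> PiE {..<n} (\<lambda>_. {0..1})"
    using u w cube_interior_subset topspace_cube_top by blast+
  then obtain j where j: "j < n" "u j \<noteq> w j" using uw
    by (metis PiE_ext lessThan_iff)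
  define m where "m = (u j + w j) / 2"
  define T1 where "T1 = (if u j < w j then {..<m} else {m<..})"
  define T2 where "T2 = (if u j < w j then {m<..} else {..<m})"
  have oT: "open T1" "open T2" by (auto simp: T1_def T2_def)
  have dT: "T1 \<inter> T2 = {}" by (auto simp: T1_def T2_def)
  have mem: "u j \<in> T1" "w j \<in> T2" using j by (auto simp: T1_def T2_def m_def)
  define O1 where "O1 = cube_interior n \<inter> {v \<in> topspace (cube_top n). v j \<in> T1}"
  define O2 where "O2 = cube_interior n \<inter> {v \<in> topspace (cube_top n). v j \<in> T2}"
  have o: "openin (cube_top n) O1" "openin (cube_top n) O2"
    unfolding O1_def O2_def using openin_cube_interior openin_cube_top_coordinate[OF j(1)] oT by (auto intro!: openin_Int)
  show ?thesis
  proof (intro exI conjI)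
    show "openin (sphere n) (Some ` O1)" by (rule openin_sphere_Some[OF o(1)]) (auto simp: O1_def)
    show "openin (sphere n) (Some ` O2)" by (rule openin_sphere_Some[OF o(2)]) (auto simp: O2_def)
    show "Some u \<in> Some ` O1" using u mem cube_interior_subset by (auto simp: O1_def)
    show "Some w \<in> Some ` O2" using w mem cube_interior_subset by (auto simp: O2_def)
    show "disjnt (Some ` O1) (Some ` O2)" using dT by (auto simp: disjnt_def O1_def O2_def)
  qed
qed

lemma Hausdorff_space_sphere: "Hausdorff_space (sphere n)"
  unfolding Hausdorff_space_def
proof (intro allI impI, elim conjE)
  fix x y assume x: "x \<in> topspace (sphere n)" and y: "y \<in> topspace (sphere n)" and xy: "x \<noteq> y"
  show "\<exists>U V. openin (sphere n) U \<and> openin (sphere n) V \<and> x \<in> U \<and> y \<in> V \<and> disjnt U V"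
  proof (cases x)
    case None
    then obtain w where w: "y = Some w" "w \<in> cube_interior n" using y xy by (auto simp: topspace_sphere)
    then show ?thesis using sphere_sep_None[OF w(2)] None by (metis disjnt_sym)
  next
    case (Some u)
    then have u: "u \<in> cube_interior n" using x by (auto simp: topspace_sphere)
    show ?thesis
    proof (cases y)
      case None
      then show ?thesis using sphere_sep_None[OF u] Some by metis
    next
      case (Some w)
      then have "w \<in> cube_interior n" using y by (auto simp: topspace_sphere)
      then show ?thesis using sphere_sep_Some[OF u] Some \<open>x = Some u\<close> xy by blast
    qed
  qed
qed

lemma compact_space_cube_top: "compact_space (cube_top n)"
  unfolding cube_top_def
  by (simp add: compact_space_product_topology compact_space_subtopology compactin_euclidean_iff)

lemma compact_space_sphere: "compact_space (sphere n)"
proof -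
  have "compactin (sphere n) (cube_q n ` topspace (cube_top n))"
    by (rule image_compactin[OF _ continuous_map_cube_q]) (use compact_space_cube_top compact_space_def in blast)
  moreover have "compactin (sphere n) {None}" by (rule finite_imp_compactin) auto
  ultimately have "compactin (sphere n) (cube_q n ` topspace (cube_top n) \<union> {None})"
    by (rule compactin_Un)
  moreover have "cube_q n ` topspace (cube_top n) \<union> {None} = topspace (sphere n)"
    using cube_q_image topspace_sphere by auto
  ultimately show ?thesis by (simp add: compact_space_def)
qed




lemma cube_top_nonempty: "(\<lambda>i. if i < n then 0 else undefined) \<in> topspace (cube_top n)"
  by (simp add: topspace_cube_top PiE_iff extensional_def)

lemma quotient_map_sphere:
  "quotient_map (sum_topology (\<lambda>_::bool. cube_top n) UNIV) (sphere n) (\<lambda>(b,u). if b then cube_q n u else None)"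
  unfolding quotient_map_def
proof (intro conjI allI impI)
  show "(\<lambda>(b,u). if b then cube_q n u else None) ` topspace (sum_topology (\<lambda>_::bool. cube_top n) UNIV) = topspace (sphere n)"
  proof -
    have "(\<lambda>(b,u). if b then cube_q n u else None) ` topspace (sum_topology (\<lambda>_::bool. cube_top n) UNIV)
          = insert None (cube_q n ` topspace (cube_top n))"
    proof (intro equalityI subsetI)
      fix y assume "y \<in> (\<lambda>(b,u). if b then cube_q n u else None) ` topspace (sum_topology (\<lambda>_::bool. cube_top n) UNIV)"
      then show "y \<in> insert None (cube_q n ` topspace (cube_top n))" by auto
    next
      fix y assume "y \<in> insert None (cube_q n ` topspace (cube_top n))"
      then consider "y = None" | u where "u \<in> topspace (cube_top n)" "y = cube_q n u" by blast
      then show "y \<in> (\<lambda>(b,u). if b then cube_q n u else None) ` topspace (sum_topology (\<lambda>_::bool. cube_top n) UNIV)"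
      proof cases
        case 1
        then show ?thesis using cube_top_nonempty[of n]
          by (intro image_eqI[of _ _ "(False, (\<lambda>i. if i < n then 0 else undefined))"]) auto
      next
        case 2
        then show ?thesis by (intro image_eqI[of _ _ "(True, u)"]) auto
      qed
    qed
    then show ?thesis using cube_q_image[of n] topspace_sphere[of n] by simp
  qed
next
  fix U assume U: "U \<subseteq> topspace (sphere n)"
  let ?Q = "\<lambda>(b,u). if b then cube_q n u else None"
  have T: "{x. (True, x) \<in> {x \<in> topspace (sum_topology (\<lambda>_::bool. cube_top n) UNIV). ?Q x \<in> U}}
           = {u \<in> topspace (cube_top n). cube_q n u \<in> U}" by auto
  have F: "{x. (False, x) \<in> {x \<in> topspace (sum_topology (\<lambda>_::bool. cube_top n) UNIV). ?Q x \<in> U}}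
           = (if None \<in> U then topspace (cube_top n) else {})" by auto
  have "openin (sum_topology (\<lambda>_::bool. cube_top n) UNIV) {x \<in> topspace (sum_topology (\<lambda>_::bool. cube_top n) UNIV). ?Q x \<in> U}
        \<longleftrightarrow> openin (cube_top n) {u \<in> topspace (cube_top n). cube_q n u \<in> U}"
  proof -
    have "openin (sum_topology (\<lambda>_::bool. cube_top n) UNIV) {x \<in> topspace (sum_topology (\<lambda>_::bool. cube_top n) UNIV). ?Q x \<in> U}
        \<longleftrightarrow> (\<forall>b. openin (cube_top n) {x. (b, x) \<in> {x \<in> topspace (sum_topology (\<lambda>_::bool. cube_top n) UNIV). ?Q x \<in> U}})"
      by (subst openin_sum_topology) auto
    also have "\<dots> \<longleftrightarrow> openin (cube_top n) {x. (True, x) \<in> {x \<in> topspace (sum_topology (\<lambda>_::bool. cube_top n) UNIV). ?Q x \<in> U}}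
         \<and> openin (cube_top n) {x. (False, x) \<in> {x \<in> topspace (sum_topology (\<lambda>_::bool. cube_top n) UNIV). ?Q x \<in> U}}"
      by (simp only: all_bool_eq)
    also have "\<dots> \<longleftrightarrow> openin (cube_top n) {u \<in> topspace (cube_top n). cube_q n u \<in> U}"
      unfolding T F by simp
    finally show ?thesis .
  qed
  also have "\<dots> \<longleftrightarrow> openin (sphere n) U"
    using U unfolding openin_sphere topspace_sphere cube_q_image by simp
  finally show "openin (sum_topology (\<lambda>_::bool. cube_top n) UNIV) {x \<in> topspace (sum_topology (\<lambda>_::bool. cube_top n) UNIV). ?Q x \<in> U} = openin (sphere n) U" .
qed

lemma susp_pt_cube_q:
  assumes u: "u \<in> topspace (cube_top n)" and s: "s \<in> {0..1}"
  shows "susp_pt n (cube_q n u) s = cube_q (Suc n) (u(n:=s))"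
proof (cases "\<exists>i<n. u i = 0 \<or> u i = 1")
  case True
  then obtain i where "i < n" "u i = 0 \<or> u i = 1" by blast
  then have "\<exists>i<Suc n. (u(n:=s)) i = 0 \<or> (u(n:=s)) i = 1" by (intro exI[of _ i]) auto
  then show ?thesis using True by (simp add: cube_q_def susp_pt_def)
next
  case False
  have eq: "(\<exists>i<Suc n. (u(n:=s)) i = 0 \<or> (u(n:=s)) i = 1) \<longleftrightarrow> (s \<le> 0 \<or> 1 \<le> s)"
  proof
    assume "\<exists>i<Suc n. (u(n:=s)) i = 0 \<or> (u(n:=s)) i = 1"
    then obtain i where "i < Suc n" "(u(n:=s)) i = 0 \<or> (u(n:=s)) i = 1" by blast
    then show "s \<le> 0 \<or> 1 \<le> s" using False by (cases "i = n") auto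
  next
    assume "s \<le> 0 \<or> 1 \<le> s"
    then have "s = 0 \<or> s = 1" using s by auto
    then show "\<exists>i<Suc n. (u(n:=s)) i = 0 \<or> (u(n:=s)) i = 1" by (intro exI[of _ n]) auto
  qed
  have l: "cube_q n u = Some u" using False by (simp add: cube_q_def)
  have r: "cube_q (Suc n) (u(n:=s)) = (if s \<le> 0 \<or> 1 \<le> s then None else Some (u(n:=s)))"
    by (simp only: cube_q_def eq)
  show ?thesis unfolding l r by (simp add: susp_pt_def)
qed

lemma continuous_map_cube_extend: "continuous_map (prod_topology unitI (cube_top n)) (cube_top (Suc n)) (\<lambda>(s,u). u(n:=s))"
  unfolding cube_top_def continuous_map_componentwise
proof (intro conjI ballI)
  show "(\<lambda>(s,u). u(n:=s)) ` topspace (prod_topology unitI (powertop unitI n)) \<subseteq> extensional {..<Suc n}"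
    by (auto simp: extensional_def PiE_iff)
  fix k assume "k \<in> {..<Suc n}"
  show "continuous_map (prod_topology unitI (powertop unitI n)) unitI (\<lambda>x. (case x of (s,u) \<Rightarrow> u(n:=s)) k)"
  proof (cases "k = n")
    case True
    then show ?thesis by (simp add: case_prod_unfold continuous_map_fst)
  next
    case False
    then have "k < n" using \<open>k \<in> {..<Suc n}\<close> by auto
    have "continuous_map (prod_topology unitI (powertop unitI n)) unitI ((\<lambda>u. u k) \<circ> snd)"
      by (rule continuous_map_compose[OF continuous_map_snd]) (use \<open>k < n\<close> in \<open>auto intro: continuous_map_product_projection\<close>)
    then show ?thesis using False by (simp add: case_prod_unfold o_def)
  qed
qed

lemma continuous_map_susp_pt: "continuous_map (prod_topology unitI (sphere n)) (sphere (Suc n)) (\<lambda>(s,y). susp_pt n y s)"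
proof (rule continuous_map_prod_quotient[OF locally_compact_space_unitI Hausdorff_space_unitI quotient_map_sphere],
       rule continuous_map_prod_sum_topology)
  fix b :: bool
  show "continuous_map (prod_topology unitI (cube_top n)) (sphere (Suc n))
          (\<lambda>(z, x). (\<lambda>(z, x). (case (z, (\<lambda>(b, u). if b then cube_q n u else None) x) of (s, y) \<Rightarrow> susp_pt n y s)) (z, b, x))"
  proof (cases b)
    case True
    have "continuous_map (prod_topology unitI (cube_top n)) (sphere (Suc n)) (cube_q (Suc n) \<circ> (\<lambda>(s,u). u(n:=s)))"
      by (rule continuous_map_compose[OF continuous_map_cube_extend continuous_map_cube_q])
    then show ?thesis
      by (rule continuous_map_eq) (use True susp_pt_cube_q in auto)
  next
    case False
    have "continuous_map (prod_topology unitI (cube_top n)) (sphere (Suc n)) (\<lambda>_. None)"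
      by (simp add: continuous_map_const)
    then show ?thesis
      by (rule continuous_map_eq) (use False in \<open>auto simp: susp_pt_def\<close>)
  qed
qed

lemma susp_pt_None [simp]: "susp_pt n None s = None"
  by (simp add: susp_pt_def)

lemma continuous_map_SPmap_susp_pt:
  "continuous_map (prod_topology unitI (SPS n)) (SPS (Suc n)) (\<lambda>(s,M). SPmap None (\<lambda>y. susp_pt n y s) M)"
proof (rule continuous_map_prod_SP[OF locally_compact_space_unitI Hausdorff_space_unitI None_in_sphere])
  fix m :: nat assume "m \<ge> 1"
  define V where "V = (\<lambda>(s::real, u::nat \<Rightarrow> (nat \<Rightarrow> real) option). (\<lambda>i. if i < m then susp_pt n (u i) s else undefined))"
  have cV: "continuous_map (prod_topology unitI (powertop (sphere n) m)) (powertop (sphere (Suc n)) m) V"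
    unfolding continuous_map_componentwise
  proof (intro conjI ballI)
    show "V ` topspace (prod_topology unitI (powertop (sphere n) m)) \<subseteq> extensional {..<m}"
      by (auto simp: V_def extensional_def)
    fix k assume k: "k \<in> {..<m}"
    have "continuous_map (prod_topology unitI (powertop (sphere n) m)) (prod_topology unitI (sphere n)) (\<lambda>(s,u). (s, u k))"
      using k by (auto simp: case_prod_unfold intro!: continuous_map_pairedI continuous_map_fst
          continuous_map_compose[OF continuous_map_snd continuous_map_product_projection, unfolded o_def])
    then have "continuous_map (prod_topology unitI (powertop (sphere n) m)) (sphere (Suc n)) ((\<lambda>(s,y). susp_pt n y s) \<circ> (\<lambda>(s,u). (s, u k)))"
      by (rule continuous_map_compose[OF _ continuous_map_susp_pt])
    then show "continuous_map (prod_topology unitI (powertop (sphere n) m)) (sphere (Suc n)) (\<lambda>x. V x k)"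
      using k by (simp add: V_def case_prod_unfold o_def)
  qed
  have "continuous_map (prod_topology unitI (powertop (sphere n) m)) (SPS (Suc n)) (sp_word None m \<circ> V)"
    by (rule continuous_map_compose[OF cV continuous_map_sp_word])
  then show "continuous_map (prod_topology unitI (powertop (sphere n) m)) (SPS (Suc n))
     (\<lambda>(z, u). (case (z, sp_word None m u) of (s, M) \<Rightarrow> SPmap None (\<lambda>y. susp_pt n y s) M))"
  proof (rule continuous_map_eq)
    fix x assume "x \<in> topspace (prod_topology unitI (powertop (sphere n) m))"
    obtain s u where x: "x = (s,u)" by fastforce
    have "SPmap None (\<lambda>y. susp_pt n y s) (sp_word None m u) = sp_word None m ((\<lambda>y. susp_pt n y s) \<circ> u)"
      by (rule SPmap_sp_word) simp
    also have "\<dots> = sp_word None m (V (s,u))"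
      by (rule sp_word_cong) (simp add: V_def)
    finally show "(sp_word None m \<circ> V) x = (\<lambda>(z, u). (case (z, sp_word None m u) of (s, M) \<Rightarrow> SPmap None (\<lambda>y. susp_pt n y s) M)) x"
      by (simp add: x)
  qed
qed

abbreviation cohomologous :: "'x topology \<Rightarrow> 'x \<Rightarrow> nat \<Rightarrow> ('x \<Rightarrow> (nat \<Rightarrow> real) option multiset) \<Rightarrow> ('x \<Rightarrow> (nat \<Rightarrow> real) option multiset) \<Rightarrow> bool" where
  "cohomologous X x0 n f g \<equiv> homotopic_with (\<lambda>h. h x0 = {#}) X (SPS n) f g"

declare homotopic_with_trans [trans]

lemma continuous_map_SPS_sum:
  assumes "\<And>i. i \<in> A \<Longrightarrow> continuous_map Y (SPS n) (f i)"
  shows "continuous_map Y (SPS n) (\<lambda>y. \<Sum>i\<in>A. f i y)"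
  by (rule continuous_map_SP_sum[OF Hausdorff_space_sphere compact_space_sphere None_in_sphere]) (use assms in auto)

lemma continuous_map_sp_ext:
  assumes y0: "y0 \<in> topspace Y" and a: "continuous_map Y (SPS n) \<alpha>" and a0: "\<alpha> y0 = {#}"
  shows "continuous_map (SP Y y0) (SPS n) (sp_ext \<alpha>)"
proof (rule continuous_map_SP[OF y0])
  fix m :: nat assume "m \<ge> 1"
  have "continuous_map (powertop Y m) (SPS n) (\<lambda>u. \<Sum>i\<in>{..<m}. \<alpha> (u i))"
  proof (rule continuous_map_SPS_sum)
    fix i assume "i \<in> {..<m}"
    then have "continuous_map (powertop Y m) Y (\<lambda>u. u i)"
      using continuous_map_product_projection[of i "{..<m}" "\<lambda>_. Y"] by simp
    from continuous_map_compose[OF this a] show "continuous_map (powertop Y m) (SPS n) (\<lambda>u. \<alpha> (u i))"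
      by (simp add: o_def)
  qed
  then show "continuous_map (powertop Y m) (SPS n) (\<lambda>u. sp_ext \<alpha> (sp_word y0 m u))"
    by (simp add: sp_ext_sp_word[of \<alpha> y0, OF a0])
qed

lemma continuous_map_prod_sp_ext:
  assumes Z: "locally_compact_space Z" "Hausdorff_space Z" and y0: "y0 \<in> topspace Y"
    and H: "continuous_map (prod_topology Z Y) (SPS n) H"
    and H0: "\<And>z. z \<in> topspace Z \<Longrightarrow> H (z, y0) = {#}"
  shows "continuous_map (prod_topology Z (SP Y y0)) (SPS n) (\<lambda>(z,M). sp_ext (\<lambda>y. H (z,y)) M)"
proof (rule continuous_map_prod_SP[OF Z y0])
  fix m :: nat assume "m \<ge> 1"
  have "continuous_map (prod_topology Z (powertop Y m)) (SPS n) (\<lambda>zu. \<Sum>i\<in>{..<m}. H (fst zu, snd zu i))"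
  proof (rule continuous_map_SPS_sum)
    fix i assume "i \<in> {..<m}"
    then have "continuous_map (prod_topology Z (powertop Y m)) (prod_topology Z Y) (\<lambda>zu. (fst zu, snd zu i))"
      by (auto intro!: continuous_map_pairedI continuous_map_fst
          continuous_map_compose[OF continuous_map_snd continuous_map_product_projection, unfolded o_def])
    from continuous_map_compose[OF this H] show "continuous_map (prod_topology Z (powertop Y m)) (SPS n) (\<lambda>zu. H (fst zu, snd zu i))"
      by (simp add: o_def)
  qed
  then show "continuous_map (prod_topology Z (powertop Y m)) (SPS n) (\<lambda>(z, u). case (z, sp_word y0 m u) of (z, M) \<Rightarrow> sp_ext (\<lambda>y. H (z, y)) M)"
  proof (rule continuous_map_eq)
    fix zu assume "zu \<in> topspace (prod_topology Z (powertop Y m))"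
    then have "fst zu \<in> topspace Z" by (metis mem_Times_iff topspace_prod_topology)
    then show "(\<Sum>i\<in>{..<m}. H (fst zu, snd zu i)) = (\<lambda>(z, u). case (z, sp_word y0 m u) of (z, M) \<Rightarrow> sp_ext (\<lambda>y. H (z, y)) M) zu"
      using H0 by (simp add: case_prod_unfold sp_ext_sp_word)
  qed
qed

lemma continuous_map_sp_ext_compose:
  assumes Z: "locally_compact_space Z" "Hausdorff_space Z" and y0: "y0 \<in> topspace Y"
    and H: "continuous_map (prod_topology Z Y) (SPS n) H"
    and p: "continuous_map X Z p" and u: "continuous_map X (SP Y y0) u"
    and H0: "\<And>z. z \<in> topspace Z \<Longrightarrow> H (z, y0) = {#}"
  shows "continuous_map X (SPS n) (\<lambda>x. sp_ext (\<lambda>y. H (p x, y)) (u x))"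
  using continuous_map_compose[OF continuous_map_pairedI[OF p u] continuous_map_prod_sp_ext[OF Z y0 H H0]]
  by (simp add: o_def)

lemma hcls_eq_if_cohomologous:
  assumes "cohomologous X x0 n f g"
  shows "hcls X x0 n f = hcls X x0 n g"
proof -
  have "cohomologous X x0 n f b \<longleftrightarrow> cohomologous X x0 n g b" for b
    using assms homotopic_with_trans homotopic_with_symD by meson
  then show ?thesis by (simp add: hcls_def)
qed

lemma cocycle_in_hcls:
  assumes "cocycle X x0 n f"
  shows "f \<in> hcls X x0 n f"
  using assms by (simp add: hcls_def cocycle_def based_map_def)

lemma rep_hcls:
  assumes "cocycle X x0 n f"
  shows "cocycle X x0 n (rep (hcls X x0 n f)) \<and> cohomologous X x0 n f (rep (hcls X x0 n f))"
proof -
  have "rep (hcls X x0 n f) \<in> hcls X x0 n f"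
    using cocycle_in_hcls[OF assms] some_in_eq by blast
  then show ?thesis by (simp add: hcls_def)
qed

lemma cohomologous_cong:
  assumes "cohomologous X x0 n f g" "x0 \<in> topspace X"
    and "\<And>x. x \<in> topspace X \<Longrightarrow> f' x = f x" "\<And>x. x \<in> topspace X \<Longrightarrow> g' x = g x"
  shows "cohomologous X x0 n f' g'"
  using assms by (intro homotopic_with_eq[OF assms(1)]) auto

lemma cohomologous_if_eq_on:
  assumes "cocycle X x0 n f" "x0 \<in> topspace X" "\<And>x. x \<in> topspace X \<Longrightarrow> f x = g x"
  shows "cohomologous X x0 n f g"
  using assms by (intro homotopic_with_equal) (auto simp: cocycle_def based_map_def)

lemma cohomologous_imp_cocycle:
  assumes "cohomologous X x0 n f g"
  shows "cocycle X x0 n f" "cocycle X x0 n g"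
  using homotopic_with_imp_continuous_maps[OF assms] homotopic_with_imp_property[OF assms]
  by (auto simp: cocycle_def based_map_def)

lemma cohomologous_compose_right:
  assumes "cohomologous Y y0 n f g" "based_map X x0 Y y0 p"
  shows "cohomologous X x0 n (f \<circ> p) (g \<circ> p)"
  using assms by (intro homotopic_with_compose_continuous_map_right) (auto simp: based_map_def)

lemma cohomologous_sp_ext_compose:
  assumes h: "cohomologous X2 x2 n f g" and x2: "x2 \<in> topspace X2"
    and u: "based_map X1 x1 (SP X2 x2) {#} u"
  shows "cohomologous X1 x1 n (sp_ext f \<circ> u) (sp_ext g \<circ> u)"
proof -
  obtain h where hc: "continuous_map (prod_topology unitI X2) (SPS n) h"
    and h0: "\<forall>x. h (0, x) = f x" and h1: "\<forall>x. h (1, x) = g x"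
    and hp: "\<forall>t\<in>{0..1}. h (t, x2) = {#}"
    using h unfolding homotopic_with_def by auto
  have "continuous_map X1 (SP X2 x2) u"
    using u by (simp add: based_map_def)
  from continuous_map_compose[OF continuous_map_snd this]
  have "continuous_map (prod_topology unitI X1) (SP X2 x2) (\<lambda>p. u (snd p))"
    by (simp add: o_def)
  then have "continuous_map (prod_topology unitI X1) (SPS n) (\<lambda>p. sp_ext (\<lambda>y. h (fst p, y)) (u (snd p)))"
    using hp by (intro continuous_map_sp_ext_compose[OF locally_compact_space_unitI Hausdorff_space_unitI x2 hc
          continuous_map_fst]) auto
  moreover have "(\<lambda>y. h (0, y)) = f" "(\<lambda>y. h (1, y)) = g"
    using h0 h1 by auto
  ultimately show ?thesis
    unfolding homotopic_with_def using u by (intro exI[of _ "\<lambda>p. sp_ext (\<lambda>y. h (fst p, y)) (u (snd p))"]) (auto simp: based_map_def)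
qed

lemma cocycle_sp_ext_compose:
  assumes a: "cocycle Y y0 n \<alpha>" and y0: "y0 \<in> topspace Y" and u: "based_map X x0 (SP Y y0) {#} u"
  shows "cocycle X x0 n (sp_ext \<alpha> \<circ> u)"
proof -
  have "continuous_map (SP Y y0) (SPS n) (sp_ext \<alpha>)"
    using a y0 by (intro continuous_map_sp_ext) (auto simp: cocycle_def based_map_def)
  then show ?thesis using u by (auto simp: cocycle_def based_map_def intro: continuous_map_compose)
qed

lemma cocycle_compose:
  assumes a: "cocycle Y y0 n \<alpha>" and p: "based_map X x0 Y y0 p"
  shows "cocycle X x0 n (\<alpha> \<circ> p)"
  using assms by (auto simp: cocycle_def based_map_def intro: continuous_map_compose)

lemma sp_pull_pull_commute:
  assumes p: "based_map X1 x1 Y1 y1 p" and q: "based_map X2 x2 Y2 y2 q"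
    and u: "based_map X1 x1 (SP X2 x2) {#} u" and v: "based_map Y1 y1 (SP Y2 y2) {#} v"
    and uv: "\<forall>x\<in>topspace X1. v (p x) = SPmap y2 q (u x)"
    and x1: "x1 \<in> topspace X1" and x2: "x2 \<in> topspace X2"
    and \<kappa>: "\<kappa> \<in> Hred Y2 y2 n"
  shows "sp_pull X1 x1 n u (pull X2 x2 n q \<kappa>) = pull X1 x1 n p (sp_pull Y1 y1 n v \<kappa>)"
proof -
  have y1: "y1 \<in> topspace Y1" using p x1 unfolding based_map_def by (metis continuous_map_in_topspace)
  have y2: "y2 \<in> topspace Y2" using q x2 unfolding based_map_def by (metis continuous_map_in_topspace)
  obtain \<alpha>0 where a0: "cocycle Y2 y2 n \<alpha>0" and k: "\<kappa> = hcls Y2 y2 n \<alpha>0"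
    using \<kappa> by (auto simp: Hred_def)
  define \<alpha> where "\<alpha> = rep \<kappa>"
  have a: "cocycle Y2 y2 n \<alpha>" and ha: "cohomologous Y2 y2 n \<alpha>0 \<alpha>"
    using rep_hcls[OF a0] by (simp_all add: \<alpha>_def k)
  have aq: "cocycle X2 x2 n (\<alpha> \<circ> q)" by (rule cocycle_compose[OF a q])
  define \<beta> where "\<beta> = rep (pull X2 x2 n q \<kappa>)"
  have hb: "cohomologous X2 x2 n (\<alpha> \<circ> q) \<beta>"
    using rep_hcls[OF aq] by (simp add: \<beta>_def pull_def \<alpha>_def)
  have av: "cocycle Y1 y1 n (sp_ext \<alpha> \<circ> v)" by (rule cocycle_sp_ext_compose[OF a y2 v])
  define \<gamma> where "\<gamma> = rep (sp_pull Y1 y1 n v \<kappa>)"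
  have hg: "cohomologous Y1 y1 n (sp_ext \<alpha> \<circ> v) \<gamma>"
    using rep_hcls[OF av] by (simp add: \<gamma>_def sp_pull_def \<alpha>_def)
  have LHS: "sp_pull X1 x1 n u (pull X2 x2 n q \<kappa>) = hcls X1 x1 n (sp_ext \<beta> \<circ> u)"
    by (simp add: sp_pull_def \<beta>_def)
  have RHS: "pull X1 x1 n p (sp_pull Y1 y1 n v \<kappa>) = hcls X1 x1 n (\<gamma> \<circ> p)"
    by (simp add: pull_def \<gamma>_def)
  have h1: "cohomologous X1 x1 n (sp_ext (\<alpha> \<circ> q) \<circ> u) (sp_ext \<beta> \<circ> u)"
    by (rule cohomologous_sp_ext_compose[OF hb x2 u])
  have h2: "cohomologous X1 x1 n (sp_ext \<alpha> \<circ> v \<circ> p) (\<gamma> \<circ> p)"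
    by (rule cohomologous_compose_right[OF hg p])
  have c3: "cocycle X1 x1 n (sp_ext (\<alpha> \<circ> q) \<circ> u)" by (rule cohomologous_imp_cocycle(1)[OF h1])
  have a_y2: "\<alpha> y2 = {#}" using a by (simp add: cocycle_def based_map_def)
  have h3: "cohomologous X1 x1 n (sp_ext (\<alpha> \<circ> q) \<circ> u) (sp_ext \<alpha> \<circ> v \<circ> p)"
    by (rule cohomologous_if_eq_on[OF c3 x1]) (use uv sp_ext_SPmap[of \<alpha> y2 q, OF a_y2] in auto)
  have "cohomologous X1 x1 n (sp_ext \<beta> \<circ> u) (\<gamma> \<circ> p)"
    by (rule homotopic_with_trans[OF homotopic_with_trans[OF homotopic_with_symD[OF h1] h3] h2])
  then show ?thesis unfolding LHS RHS by (rule hcls_eq_if_cohomologous)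
qed


lemma susp_cocycle_0 [simp]: "susp_cocycle n \<alpha> (x, 0) = {#}"
proof -
  have "(\<lambda>y. susp_pt n y 0) = (\<lambda>_. None)" by (auto simp: fun_eq_iff susp_pt_def split: option.split)
  then show ?thesis by (simp add: susp_cocycle_def SPmap_const)
qed

lemma susp_cocycle_1 [simp]: "susp_cocycle n \<alpha> (x, 1) = {#}"
proof -
  have "(\<lambda>y. susp_pt n y 1) = (\<lambda>_. None)" by (auto simp: fun_eq_iff susp_pt_def split: option.split)
  then show ?thesis by (simp add: susp_cocycle_def SPmap_const)
qed

lemma susp_cocycle_eq_empty: "\<alpha> x = {#} \<Longrightarrow> susp_cocycle n \<alpha> (x, s) = {#}"
  by (simp add: susp_cocycle_def)

lemma continuous_map_susp_compose:
  assumes "continuous_map X unitI s" "continuous_map X (SPS n) k"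
  shows "continuous_map X (SPS (Suc n)) (\<lambda>x. SPmap None (\<lambda>y. susp_pt n y (s x)) (k x))"
  using continuous_map_compose[OF continuous_map_pairedI[OF assms] continuous_map_SPmap_susp_pt]
  by (simp add: o_def)

lemma continuous_map_susp_cocycle:
  assumes "continuous_map A (SPS n) \<alpha>"
  shows "continuous_map (prod_topology A unitI) (SPS (Suc n)) (susp_cocycle n \<alpha>)"
  using continuous_map_susp_compose[OF continuous_map_snd continuous_map_compose[OF continuous_map_fst assms]]
  by (simp add: susp_cocycle_def[abs_def] o_def case_prod_unfold)

lemma continuous_map_susp_cocycle_homotopy:
  assumes "continuous_map (prod_topology unitI A) (SPS n) k"
  shows "continuous_map (prod_topology unitI (prod_topology A unitI)) (SPS (Suc n))
           (\<lambda>(t,p). susp_cocycle n (\<lambda>x. k (t,x)) p)"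
proof -
  let ?X = "prod_topology unitI (prod_topology A unitI)"
  have "continuous_map ?X (prod_topology unitI A) (\<lambda>p. (fst p, fst (snd p)))"
    using continuous_map_pairedI[OF continuous_map_fst continuous_map_compose[OF continuous_map_snd continuous_map_fst]]
    by (simp add: o_def)
  moreover have "continuous_map ?X unitI (\<lambda>p. snd (snd p))"
    using continuous_map_compose[OF continuous_map_snd continuous_map_snd] by (simp add: o_def)
  ultimately show ?thesis
    using continuous_map_susp_compose[OF _ continuous_map_compose[OF _ assms]]
    by (simp add: susp_cocycle_def[abs_def] o_def case_prod_unfold)
qed

text \<open>The contraction of the cone on A used for the connecting map: at t = 0 it is the identity,
  at t = 1 everything is pushed to the cone point s = 1.\<close>

lemma continuous_map_susp_cocycle_cone_contraction:
  assumes "continuous_map A (SPS n) \<alpha>"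
  shows "continuous_map (prod_topology (prod_topology A unitI) unitI) (SPS (Suc n))
           (\<lambda>((x,s),t). susp_cocycle n \<alpha> (x, s + (1 - s) * (1 - t)))"
proof -
  let ?X = "prod_topology (prod_topology A unitI) unitI"
  have s: "continuous_map ?X euclideanreal (\<lambda>p. snd (fst p))"
    using continuous_map_compose[OF continuous_map_fst[of "prod_topology A unitI" unitI] continuous_map_snd[of A unitI]]
    by (simp add: continuous_map_in_subtopology o_def)
  have t: "continuous_map ?X euclideanreal snd"
    using continuous_map_snd[of "prod_topology A unitI" unitI] by (simp add: continuous_map_in_subtopology)
  have "continuous_map ?X euclideanreal (\<lambda>p. snd (fst p) + (1 - snd (fst p)) * (1 - snd p))"
    by (intro continuous_map_add continuous_map_real_mult continuous_map_diff s t continuous_map_const[THEN iffD2]) auto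
  moreover have "snd (fst p) + (1 - snd (fst p)) * (1 - snd p) \<in> {0..1}" if "p \<in> topspace ?X" for p
  proof -
    have st: "0 \<le> snd (fst p)" "snd (fst p) \<le> 1" "0 \<le> snd p" "snd p \<le> 1" using that by auto
    then have "0 \<le> (1 - snd (fst p)) * (1 - snd p)" "(1 - snd (fst p)) * (1 - snd p) \<le> 1 - snd (fst p)"
      by (simp_all add: mult_left_le)
    then show ?thesis using st by auto
  qed
  ultimately have "continuous_map ?X unitI (\<lambda>p. snd (fst p) + (1 - snd (fst p)) * (1 - snd p))"
    by (simp add: continuous_map_in_subtopology image_subset_iff)
  moreover have "continuous_map ?X A (\<lambda>p. fst (fst p))"
    using continuous_map_compose[OF continuous_map_fst continuous_map_fst] by (simp add: o_def)
  ultimately show ?thesis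
    using continuous_map_susp_compose[OF _ continuous_map_compose[OF _ assms]]
    by (simp add: susp_cocycle_def[abs_def] o_def case_prod_unfold)
qed

section \<open>The reduced mapping cylinder\<close>

definition disjoint_union_topology :: "'b topology \<Rightarrow> 'd topology \<Rightarrow> ('b + 'd) topology" where
  "disjoint_union_topology B D = topology (\<lambda>U. U \<subseteq> Inl ` topspace B \<union> Inr ` topspace D \<and>
      openin B {b. Inl b \<in> U} \<and> openin D {d. Inr d \<in> U})"

lemma istopology_disjoint_union:
  "istopology (\<lambda>U. U \<subseteq> Inl ` topspace B \<union> Inr ` topspace D \<and> openin B {b. Inl b \<in> U} \<and> openin D {d. Inr d \<in> U})"
proof -
  have eqs: "{b. Inl b \<in> S \<inter> T} = {b. Inl b \<in> S} \<inter> {b. Inl b \<in> T}"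
    "{d. Inr d \<in> S \<inter> T} = {d. Inr d \<in> S} \<inter> {d. Inr d \<in> T}"
    "{b. Inl b \<in> \<Union>K} = \<Union>((\<lambda>S. {b. Inl b \<in> S}) ` K)"
    "{d. Inr d \<in> \<Union>K} = \<Union>((\<lambda>S. {d. Inr d \<in> S}) ` K)"
    for S T K by blast+
  show ?thesis
    unfolding istopology_def eqs by (auto intro!: openin_Int openin_Union)
qed

lemma openin_disjoint_union_topology:
  "openin (disjoint_union_topology B D) U \<longleftrightarrow> U \<subseteq> Inl ` topspace B \<union> Inr ` topspace D \<and>
      openin B {b. Inl b \<in> U} \<and> openin D {d. Inr d \<in> U}"
  unfolding disjoint_union_topology_def topology_inverse'[OF istopology_disjoint_union] by (rule refl)

lemma topspace_disjoint_union_topology [simp]: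
  "topspace (disjoint_union_topology B D) = Inl ` topspace B \<union> Inr ` topspace D"
proof -
  have "openin (disjoint_union_topology B D) (Inl ` topspace B \<union> Inr ` topspace D)"
    unfolding openin_disjoint_union_topology by (auto simp: image_iff)
  then show ?thesis
    using openin_subset openin_disjoint_union_topology[of B D "topspace (disjoint_union_topology B D)"]
    by blast
qed

lemma open_map_Inl: "open_map B (disjoint_union_topology B D) Inl"
  unfolding open_map_def openin_disjoint_union_topology using openin_subset by (fastforce simp: image_iff)

lemma open_map_Inr: "open_map D (disjoint_union_topology B D) Inr"
  unfolding open_map_def openin_disjoint_union_topology using openin_subset by (fastforce simp: image_iff)

lemma continuous_map_prod_disjoint_union_topology:
  assumes \<psi>B: "continuous_map (prod_topology Z B) W (\<lambda>(z,b). \<psi> (z, Inl b))"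
    and \<psi>D: "continuous_map (prod_topology Z D) W (\<lambda>(z,d). \<psi> (z, Inr d))"
  shows "continuous_map (prod_topology Z (disjoint_union_topology B D)) W \<psi>"
  unfolding continuous_map_def
proof (intro conjI allI impI)
  show "\<psi> \<in> topspace (prod_topology Z (disjoint_union_topology B D)) \<rightarrow> topspace W"
  proof
    fix p assume "p \<in> topspace (prod_topology Z (disjoint_union_topology B D))"
    then obtain z y where "p = (z, y)" "z \<in> topspace Z" "y \<in> Inl ` topspace B \<union> Inr ` topspace D"
      by auto
    then show "\<psi> p \<in> topspace W"
      using continuous_map_in_topspace[OF \<psi>B] continuous_map_in_topspace[OF \<psi>D] by auto
  qed
  fix U assume U: "openin W U"
  let ?P = "{p \<in> topspace (prod_topology Z (disjoint_union_topology B D)). \<psi> p \<in> U}"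
  show "openin (prod_topology Z (disjoint_union_topology B D)) ?P"
  proof (subst openin_subopen, intro ballI)
    fix p assume "p \<in> ?P"
    then obtain z y where p: "p = (z, y)" "z \<in> topspace Z" "\<psi> (z, y) \<in> U"
      and "y \<in> Inl ` topspace B \<union> Inr ` topspace D"
      by auto
    then consider b where "y = Inl b" "b \<in> topspace B" | d where "y = Inr d" "d \<in> topspace D"
      by blast
    then obtain T where T: "openin (prod_topology Z (disjoint_union_topology B D)) T" "p \<in> T" "T \<subseteq> {p. \<psi> p \<in> U}"
    proof cases
      case 1
      then show ?thesis
        using open_map_prod_neighbourhood[where \<psi> = \<psi> and j = Inl, OF \<psi>B open_map_Inl U, of z b] p that
        by blast
    next
      case 2
      then show ?thesis
        using open_map_prod_neighbourhood[where \<psi> = \<psi> and j = Inr, OF \<psi>D open_map_Inr U, of z d] p that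
        by blast
    qed
    then have "T \<subseteq> ?P" using openin_subset[OF T(1)] by blast
    with T show "\<exists>T. openin (prod_topology Z (disjoint_union_topology B D)) T \<and> p \<in> T \<and> T \<subseteq> ?P"
      by blast
  qed
qed

text \<open>The reduced mapping cylinder of f : A \<rightarrow> B: the point (x, s) of A \<times> I is glued to f x
  at s = 0, and the segment over the base point a0 is collapsed.  Points of B are tagged by Inr
  at height 0, the remaining points of A \<times> I by Inl.  Its type is the type of the test spaces
  allowed in the definition of based_cofibration.\<close>

definition cyl_base :: "'b \<Rightarrow> ('a + 'b) \<times> real" where
  "cyl_base b = (Inr b, 0)"

definition cyl_map :: "'a \<Rightarrow> ('a \<Rightarrow> 'b) \<Rightarrow> 'a \<times> real \<Rightarrow> ('a + 'b) \<times> real" where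
  "cyl_map a0 f p = (if snd p = 0 \<or> fst p = a0 then (Inr (f (fst p)), 0) else (Inl (fst p), snd p))"

definition mapping_cylinder :: "'a topology \<Rightarrow> 'a \<Rightarrow> 'b topology \<Rightarrow> ('a \<Rightarrow> 'b) \<Rightarrow> (('a + 'b) \<times> real) topology" where
  "mapping_cylinder A a0 B f = topology (\<lambda>U.
      U \<subseteq> cyl_base ` topspace B \<union> cyl_map a0 f ` topspace (prod_topology A unitI) \<and>
      openin B {b \<in> topspace B. cyl_base b \<in> U} \<and>
      openin (prod_topology A unitI) {p \<in> topspace (prod_topology A unitI). cyl_map a0 f p \<in> U})"

definition cyl_case :: "('b \<Rightarrow> 'w) \<Rightarrow> ('a \<times> real \<Rightarrow> 'w) \<Rightarrow> ('a + 'b) \<times> real \<Rightarrow> 'w" where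
  "cyl_case hb ha z = (case fst z of Inr b \<Rightarrow> hb b | Inl x \<Rightarrow> ha (x, snd z))"

lemma cyl_case_cyl_base [simp]: "cyl_case hb ha (cyl_base b) = hb b"
  by (simp add: cyl_case_def cyl_base_def)

lemma cyl_case_cyl_map:
  "cyl_case hb ha (cyl_map a0 f (x,s)) = (if s = 0 \<or> x = a0 then hb (f x) else ha (x,s))"
  by (simp add: cyl_case_def cyl_map_def)

lemma istopology_mapping_cylinder:
  "istopology (\<lambda>U. U \<subseteq> cyl_base ` topspace B \<union> cyl_map a0 f ` topspace (prod_topology A unitI) \<and>
      openin B {b \<in> topspace B. cyl_base b \<in> U} \<and>
      openin (prod_topology A unitI) {p \<in> topspace (prod_topology A unitI). cyl_map a0 f p \<in> U})"
proof -
  have eqs: "{b \<in> topspace B. cyl_base b \<in> S \<inter> T} = {b \<in> topspace B. cyl_base b \<in> S} \<inter> {b \<in> topspace B. cyl_base b \<in> T}"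
    "{p \<in> topspace (prod_topology A unitI). cyl_map a0 f p \<in> S \<inter> T} =
       {p \<in> topspace (prod_topology A unitI). cyl_map a0 f p \<in> S} \<inter> {p \<in> topspace (prod_topology A unitI). cyl_map a0 f p \<in> T}"
    "{b \<in> topspace B. cyl_base b \<in> \<Union>K} = \<Union>((\<lambda>S. {b \<in> topspace B. cyl_base b \<in> S}) ` K)"
    "{p \<in> topspace (prod_topology A unitI). cyl_map a0 f p \<in> \<Union>K} =
       \<Union>((\<lambda>S. {p \<in> topspace (prod_topology A unitI). cyl_map a0 f p \<in> S}) ` K)"
    for S T K by blast+
  show ?thesis
    unfolding istopology_def eqs by (auto intro!: openin_Int openin_Union)
qed

lemma openin_mapping_cylinder:
  "openin (mapping_cylinder A a0 B f) U \<longleftrightarrow>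
     U \<subseteq> cyl_base ` topspace B \<union> cyl_map a0 f ` topspace (prod_topology A unitI) \<and>
     openin B {b \<in> topspace B. cyl_base b \<in> U} \<and>
     openin (prod_topology A unitI) {p \<in> topspace (prod_topology A unitI). cyl_map a0 f p \<in> U}"
  unfolding mapping_cylinder_def topology_inverse'[OF istopology_mapping_cylinder] by (rule refl)

lemma topspace_mapping_cylinder:
  "topspace (mapping_cylinder A a0 B f) = cyl_base ` topspace B \<union> cyl_map a0 f ` topspace (prod_topology A unitI)"
    (is "_ = ?carrier")
proof -
  have eqs: "{b \<in> topspace B. cyl_base b \<in> ?carrier} = topspace B"
    "{p \<in> topspace (prod_topology A unitI). cyl_map a0 f p \<in> ?carrier} = topspace (prod_topology A unitI)"
    by blast+
  have "openin (mapping_cylinder A a0 B f) ?carrier"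
    unfolding openin_mapping_cylinder eqs by (simp only: openin_topspace subset_refl simp_thms)
  then show ?thesis
    using openin_subset openin_mapping_cylinder[of A a0 B f "topspace (mapping_cylinder A a0 B f)"]
    by blast
qed

lemma quotient_map_mapping_cylinder:
  "quotient_map (disjoint_union_topology B (prod_topology A unitI)) (mapping_cylinder A a0 B f)
     (case_sum cyl_base (cyl_map a0 f))"
  unfolding quotient_map_def
proof (intro conjI allI impI)
  let ?D = "disjoint_union_topology B (prod_topology A unitI)"
  show "case_sum cyl_base (cyl_map a0 f) ` topspace ?D = topspace (mapping_cylinder A a0 B f)"
    by (simp add: topspace_mapping_cylinder image_Un image_image)
  fix U assume U: "U \<subseteq> topspace (mapping_cylinder A a0 B f)"
  have eqs: "{b. Inl b \<in> {x \<in> topspace ?D. case_sum cyl_base (cyl_map a0 f) x \<in> U}} = {b \<in> topspace B. cyl_base b \<in> U}"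
    "{p. Inr p \<in> {x \<in> topspace ?D. case_sum cyl_base (cyl_map a0 f) x \<in> U}} =
      {p \<in> topspace (prod_topology A unitI). cyl_map a0 f p \<in> U}"
    by auto
  show "openin ?D {x \<in> topspace ?D. case_sum cyl_base (cyl_map a0 f) x \<in> U} =
      openin (mapping_cylinder A a0 B f) U"
    using U unfolding openin_disjoint_union_topology openin_mapping_cylinder eqs
    by (auto simp: topspace_mapping_cylinder)
qed

lemma continuous_map_prod_mapping_cylinder:
  assumes "continuous_map (prod_topology unitI B) W (\<lambda>(t,b). \<Phi> (t, cyl_base b))"
    and "continuous_map (prod_topology unitI (prod_topology A unitI)) W (\<lambda>(t,p). \<Phi> (t, cyl_map a0 f p))"
  shows "continuous_map (prod_topology unitI (mapping_cylinder A a0 B f)) W \<Phi>"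
  by (rule continuous_map_prod_quotient[OF locally_compact_space_unitI Hausdorff_space_unitI
        quotient_map_mapping_cylinder], rule continuous_map_prod_disjoint_union_topology)
     (use assms in simp_all)

lemma continuous_map_cyl_base: "continuous_map B (mapping_cylinder A a0 B f) cyl_base"
  unfolding continuous_map_def openin_mapping_cylinder topspace_mapping_cylinder by blast

lemma continuous_map_cyl_map: "continuous_map (prod_topology A unitI) (mapping_cylinder A a0 B f) (cyl_map a0 f)"
  unfolding continuous_map_def openin_mapping_cylinder topspace_mapping_cylinder by blast

lemma mapping_cylinder_cases:
  assumes "z \<in> topspace (mapping_cylinder A a0 B f)"
  obtains b where "b \<in> topspace B" "z = cyl_base b"
    | x s where "x \<in> topspace A" "s \<in> {0..1}" "z = cyl_map a0 f (x, s)"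
  using assms unfolding topspace_mapping_cylinder by auto

lemma continuous_map_prod_cyl_case:
  assumes hb: "continuous_map (prod_topology unitI B) W (\<lambda>(t,b). hb t b)"
    and ha: "continuous_map (prod_topology unitI (prod_topology A unitI)) W (\<lambda>(t,p). ha t p)"
    and compat: "\<And>t x s. t \<in> {0..1} \<Longrightarrow> x \<in> topspace A \<Longrightarrow> s \<in> {0..1} \<Longrightarrow> s = 0 \<or> x = a0 \<Longrightarrow>
      ha t (x,s) = hb t (f x)"
  shows "continuous_map (prod_topology unitI (mapping_cylinder A a0 B f)) W (\<lambda>(t,z). cyl_case (hb t) (ha t) z)"
proof (rule continuous_map_prod_mapping_cylinder)
  show "continuous_map (prod_topology unitI B) W (\<lambda>(t, b). (\<lambda>(t,z). cyl_case (hb t) (ha t) z) (t, cyl_base b))"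
    using hb by simp
  show "continuous_map (prod_topology unitI (prod_topology A unitI)) W
      (\<lambda>(t, p). (\<lambda>(t,z). cyl_case (hb t) (ha t) z) (t, cyl_map a0 f p))"
    using ha by (rule continuous_map_eq) (use compat in \<open>auto simp: cyl_case_cyl_map\<close>)
qed

lemma continuous_map_cyl_case:
  assumes hb: "continuous_map B W hb" and ha: "continuous_map (prod_topology A unitI) W ha"
    and compat: "\<And>x s. x \<in> topspace A \<Longrightarrow> s \<in> {0..1} \<Longrightarrow> s = 0 \<or> x = a0 \<Longrightarrow> ha (x,s) = hb (f x)"
  shows "continuous_map (mapping_cylinder A a0 B f) W (cyl_case hb ha)"
proof -
  have c: "continuous_map (prod_topology unitI (mapping_cylinder A a0 B f)) W (\<lambda>(t,z). cyl_case hb ha z)"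
    using continuous_map_compose[OF continuous_map_snd hb] continuous_map_compose[OF continuous_map_snd ha] compat
    by (intro continuous_map_prod_cyl_case) (simp_all add: o_def case_prod_unfold)
  have "continuous_map (mapping_cylinder A a0 B f) (prod_topology unitI (mapping_cylinder A a0 B f)) (\<lambda>z. (0, z))"
    by (simp add: continuous_map_pairedI continuous_map_const)
  from continuous_map_compose[OF this c] show ?thesis
    by (simp add: o_def)
qed

text \<open>The suspension of a cocycle on A, pulled back to the mapping cylinder along the collapse
  of B (the composite of the quotient onto the cone of A and the collapse of the cone onto \<Sigma>A).\<close>

definition cyl_susp :: "nat \<Rightarrow> ('a \<Rightarrow> (nat \<Rightarrow> real) option multiset) \<Rightarrow> ('a + 'b) \<times> real \<Rightarrow> (nat \<Rightarrow> real) option multiset" where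
  "cyl_susp n \<alpha> = cyl_case (\<lambda>_. {#}) (susp_cocycle n \<alpha>)"

lemma cyl_susp_cyl_base [simp]: "cyl_susp n \<alpha> (cyl_base b) = {#}"
  by (simp add: cyl_susp_def)

lemma cyl_susp_cyl_map: "\<alpha> a0 = {#} \<Longrightarrow> cyl_susp n \<alpha> (cyl_map a0 f p) = susp_cocycle n \<alpha> p"
  by (cases p) (auto simp: cyl_susp_def cyl_case_cyl_map susp_cocycle_eq_empty)

lemma continuous_map_cyl_susp:
  assumes "cocycle A a0 n \<alpha>"
  shows "continuous_map (mapping_cylinder A a0 B f) (SPS (Suc n)) (cyl_susp n \<alpha>)"
  unfolding cyl_susp_def using assms
  by (intro continuous_map_cyl_case continuous_map_susp_cocycle)
     (auto simp: cocycle_def based_map_def continuous_map_const susp_cocycle_eq_empty)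

section \<open>Cofibration sequences and the connecting map\<close>

locale cofibration_sequence =
  fixes A :: "'a topology" and a0 :: 'a and B :: "'b topology" and b0 :: 'b
    and C :: "'c topology" and c0 :: 'c and f :: "'a \<Rightarrow> 'b" and g :: "'b \<Rightarrow> 'c"
  assumes seq: "based_cofib_seq A a0 B b0 C c0 f g"
begin

lemma based_cofibration: "based_cofibration A a0 B b0 f"
  using seq by (simp add: based_cofib_seq_def)

lemma a0_in_A: "a0 \<in> topspace A"
  using based_cofibration by (simp add: based_cofibration_def)

lemma based_map_f: "based_map A a0 B b0 f"
  using based_cofibration by (simp add: based_cofibration_def)

lemma quotient_map_g: "quotient_map B C g"
  using seq by (simp add: based_cofib_seq_def)

lemma based_map_g: "based_map B b0 C c0 g"
  using seq quotient_imp_continuous_map[OF quotient_map_g] by (simp add: based_cofib_seq_def based_map_def)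

lemma g_f: "x \<in> topspace A \<Longrightarrow> g (f x) = c0"
  using seq by (simp add: based_cofib_seq_def)

lemma g_eq_imp_in_image:
  "b \<in> topspace B \<Longrightarrow> b' \<in> topspace B \<Longrightarrow> g b = g b' \<Longrightarrow> b \<noteq> b' \<Longrightarrow> b \<in> f ` topspace A"
  using seq unfolding based_cofib_seq_def by blast

lemma b0_in_B: "b0 \<in> topspace B"
  using continuous_map_in_topspace[OF _ a0_in_A] based_map_f by (auto simp: based_map_def)

lemma c0_in_C: "c0 \<in> topspace C"
  using continuous_map_in_topspace[OF _ b0_in_B] based_map_g by (auto simp: based_map_def)

text \<open>The homotopy extension property, applied with the mapping cylinder as test space, deforms
  B into the cylinder by a homotopy extending the obvious one on f(A).\<close>

lemma cylinder_deformation: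
  obtains H where "continuous_map (prod_topology B unitI) (mapping_cylinder A a0 B f) H"
    "\<And>b. b \<in> topspace B \<Longrightarrow> H (b,0) = cyl_base b"
    "\<And>x t. x \<in> topspace A \<Longrightarrow> t \<in> {0..1} \<Longrightarrow> H (f x, t) = cyl_map a0 f (x,t)"
    "\<And>t. t \<in> {0..1} \<Longrightarrow> H (b0, t) = cyl_base b0"
proof -
  have hep: "\<forall>(Z :: (('a + 'b) \<times> real) topology) z0 h G.
      z0 \<in> topspace Z \<and> based_map B b0 Z z0 h \<and> continuous_map (prod_topology A unitI) Z G \<and>
      (\<forall>x\<in>topspace A. G (x, 0) = h (f x)) \<and> (\<forall>t\<in>{0..1}. G (a0, t) = z0)
      \<longrightarrow> (\<exists>H. continuous_map (prod_topology B unitI) Z H \<and> (\<forall>b\<in>topspace B. H (b, 0) = h b) \<and>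
             (\<forall>x\<in>topspace A. \<forall>t\<in>{0..1}. H (f x, t) = G (x, t)) \<and> (\<forall>t\<in>{0..1}. H (b0, t) = z0))"
    using based_cofibration by (simp add: based_cofibration_def)
  have "\<exists>H. continuous_map (prod_topology B unitI) (mapping_cylinder A a0 B f) H \<and>
      (\<forall>b\<in>topspace B. H (b, 0) = cyl_base b) \<and>
      (\<forall>x\<in>topspace A. \<forall>t\<in>{0..1}. H (f x, t) = cyl_map a0 f (x, t)) \<and>
      (\<forall>t\<in>{0..1}. H (b0, t) = cyl_base b0)"
  proof (rule hep[rule_format], intro conjI)
    show "cyl_base b0 \<in> topspace (mapping_cylinder A a0 B f)"
      using continuous_map_in_topspace[OF continuous_map_cyl_base b0_in_B] .
    show "based_map B b0 (mapping_cylinder A a0 B f) (cyl_base b0) cyl_base"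
      by (simp add: based_map_def continuous_map_cyl_base)
    show "\<forall>x\<in>topspace A. cyl_map a0 f (x, 0) = cyl_base (f x)"
      "\<forall>t\<in>{0..1}. cyl_map a0 f (a0, t) = cyl_base b0"
      using based_map_f by (simp_all add: cyl_map_def cyl_base_def based_map_def)
  qed (rule continuous_map_cyl_map)
  then show ?thesis
    using that by blast
qed

definition descend :: "('b \<Rightarrow> 'w) \<Rightarrow> 'c \<Rightarrow> 'w" where
  "descend \<phi> c = \<phi> (SOME b. b \<in> topspace B \<and> g b = c)"

lemma descend_g:
  assumes "\<And>x. x \<in> topspace A \<Longrightarrow> \<phi> (f x) = z" and b: "b \<in> topspace B"
  shows "descend \<phi> (g b) = \<phi> b"
proof -
  define b' where "b' = (SOME b'. b' \<in> topspace B \<and> g b' = g b)"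
  have b': "b' \<in> topspace B" "g b' = g b"
    using someI_ex[of "\<lambda>b'. b' \<in> topspace B \<and> g b' = g b"] b by (auto simp: b'_def)
  then have "b' = b \<or> (b' \<in> f ` topspace A \<and> b \<in> f ` topspace A)"
    using g_eq_imp_in_image[OF b'(1) b b'(2)] g_eq_imp_in_image[OF b b'(1) b'(2)[symmetric]] by blast
  then show ?thesis
    using assms(1) by (auto simp: descend_def b'_def[symmetric])
qed

lemma continuous_map_descend:
  assumes \<phi>: "continuous_map B W \<phi>" and \<phi>f: "\<And>x. x \<in> topspace A \<Longrightarrow> \<phi> (f x) = z"
  shows "continuous_map C W (descend \<phi>)"
proof (rule continuous_compose_quotient_map[OF quotient_map_g])
  show "continuous_map B W (descend \<phi> \<circ> g)"
    using \<phi> by (rule continuous_map_eq) (simp add: descend_g[of \<phi>, OF \<phi>f])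
qed

lemma cohomologous_if_homotopy_through_g:
  assumes K: "continuous_map (prod_topology unitI B) (SPS m) K"
    and Kf: "\<And>t x. t \<in> {0..1} \<Longrightarrow> x \<in> topspace A \<Longrightarrow> K (t, f x) = {#}"
    and K0: "\<And>b. b \<in> topspace B \<Longrightarrow> K (0, b) = \<beta> (g b)"
    and K1: "\<And>b. b \<in> topspace B \<Longrightarrow> K (1, b) = \<beta>' (g b)"
  shows "cohomologous C c0 m \<beta> \<beta>'"
proof -
  define L where "L = (\<lambda>(t, c). descend (\<lambda>b. K (t, b)) c)"
  have Lg: "L (t, g b) = K (t, b)" if "t \<in> {0..1}" "b \<in> topspace B" for t b
    using descend_g[of "\<lambda>b. K (t, b)", OF Kf[OF that(1)] that(2)] by (simp add: L_def)
  have "quotient_map (prod_topology unitI B) (prod_topology unitI C) (\<lambda>(t, b). (t, g b))"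
    by (rule quotient_map_prod_right[OF locally_compact_space_unitI disjI1[OF Hausdorff_space_unitI] quotient_map_g])
  moreover have "continuous_map (prod_topology unitI B) (SPS m) (L \<circ> (\<lambda>(t, b). (t, g b)))"
    using K by (rule continuous_map_eq) (auto simp: Lg)
  ultimately have "continuous_map (prod_topology unitI C) (SPS m) L"
    by (rule continuous_compose_quotient_map)
  moreover have "L (t, c0) = {#}" if "t \<in> {0..1}" for t
    using Lg[OF that b0_in_B] Kf[OF that a0_in_A] based_map_f based_map_g by (simp add: based_map_def)
  ultimately have L: "cohomologous C c0 m (\<lambda>c. L (0, c)) (\<lambda>c. L (1, c))"
    unfolding homotopic_with_def by (intro exI[of _ L]) auto
  have eq: "\<beta> c = L (0, c) \<and> \<beta>' c = L (1, c)" if "c \<in> topspace C" for c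
  proof -
    have "c \<in> g ` topspace B"
      using quotient_imp_surjective_map[OF quotient_map_g] that by simp
    then obtain b where "b \<in> topspace B" "c = g b" by blast
    then show ?thesis by (simp add: Lg K0 K1)
  qed
  show ?thesis
    by (rule cohomologous_cong[OF L c0_in_C]) (simp_all add: eq)
qed

text \<open>The class \<partial>*[\<alpha>] exists: deform B into the mapping cylinder and apply the suspension
  of \<alpha> there; the homotopy on the cone contracts it towards the cone point.\<close>

lemma conn_rel_exists:
  assumes \<alpha>: "cocycle A a0 n \<alpha>"
  shows "\<exists>\<beta>. cocycle C c0 (Suc n) \<beta> \<and> conn_rel A a0 B b0 f g n \<alpha> \<beta>"
proof -
  have \<alpha>0: "\<alpha> a0 = {#}" and c\<alpha>: "continuous_map A (SPS n) \<alpha>"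
    using \<alpha> by (auto simp: cocycle_def based_map_def)
  obtain H where cH: "continuous_map (prod_topology B unitI) (mapping_cylinder A a0 B f) H"
    and H0: "\<And>b. b \<in> topspace B \<Longrightarrow> H (b,0) = cyl_base b"
    and Hf: "\<And>x t. x \<in> topspace A \<Longrightarrow> t \<in> {0..1} \<Longrightarrow> H (f x, t) = cyl_map a0 f (x,t)"
    and Hb0: "\<And>t. t \<in> {0..1} \<Longrightarrow> H (b0, t) = cyl_base b0"
    using cylinder_deformation by blast
  define \<phi> where "\<phi> = (\<lambda>b. cyl_susp n \<alpha> (H (b,1)))"
  have \<phi>f: "\<phi> (f x) = {#}" if "x \<in> topspace A" for x
    using that by (simp add: \<phi>_def Hf cyl_susp_cyl_map[of \<alpha>, OF \<alpha>0])
  have "continuous_map B (prod_topology B unitI) (\<lambda>b. (b, 1))"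
    by (simp add: continuous_map_pairedI continuous_map_const)
  then have "continuous_map B (SPS (Suc n)) \<phi>"
    using continuous_map_compose[OF continuous_map_compose[OF _ cH] continuous_map_cyl_susp[OF \<alpha>]]
    by (simp add: \<phi>_def o_def)
  then have c\<beta>: "continuous_map C (SPS (Suc n)) (descend \<phi>)"
    by (rule continuous_map_descend[where \<phi> = \<phi>, OF _ \<phi>f])
  have \<beta>g: "descend \<phi> (g b) = \<phi> b" if "b \<in> topspace B" for b
    using descend_g[of \<phi>, OF \<phi>f that] .
  have "descend \<phi> c0 = {#}"
    using \<beta>g[OF b0_in_B] based_map_g by (simp add: based_map_def \<phi>_def Hb0)
  then have "cocycle C c0 (Suc n) (descend \<phi>)"
    using c\<beta> by (simp add: cocycle_def based_map_def)
  moreover have "conn_rel A a0 B b0 f g n \<alpha> (descend \<phi>)"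
    unfolding conn_rel_def
  proof (intro exI conjI ballI)
    have "continuous_map (prod_topology B unitI) euclideanreal snd"
      using continuous_map_snd[of B unitI] by (simp add: continuous_map_in_subtopology)
    then have "continuous_map (prod_topology B unitI) unitI (\<lambda>p. 1 - snd p)"
      by (auto simp: continuous_map_in_subtopology intro!: continuous_map_diff)
    then have "continuous_map (prod_topology B unitI) (prod_topology B unitI) (\<lambda>(b,t). (b, 1 - t))"
      by (simp add: case_prod_unfold continuous_map_pairedI continuous_map_fst)
    then show "continuous_map (prod_topology B unitI) (SPS (Suc n)) (\<lambda>(b,t). cyl_susp n \<alpha> (H (b, 1 - t)))"
      using continuous_map_compose[OF continuous_map_compose[OF _ cH] continuous_map_cyl_susp[OF \<alpha>]]
      by (simp add: o_def case_prod_unfold)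
    show "continuous_map (prod_topology (prod_topology A unitI) unitI) (SPS (Suc n))
        (\<lambda>((x,s),t). susp_cocycle n \<alpha> (x, s + (1 - s) * (1 - t)))"
      by (rule continuous_map_susp_cocycle_cone_contraction[OF c\<alpha>])
  next
    fix b assume b: "b \<in> topspace B"
    show "(\<lambda>(b,t). cyl_susp n \<alpha> (H (b, 1 - t))) (b, 0) = descend \<phi> (g b)"
      using \<beta>g[OF b] by (simp add: \<phi>_def)
    show "(\<lambda>(b,t). cyl_susp n \<alpha> (H (b, 1 - t))) (b, 1) = {#}"
      using b by (simp add: H0)
  next
    fix t :: real assume "t \<in> {0..1}"
    then show "(\<lambda>(b,t). cyl_susp n \<alpha> (H (b, 1 - t))) (b0, t) = {#}"
      by (simp add: Hb0)
  next
    fix x s assume "x \<in> topspace A" "s \<in> {0..1::real}"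
    show "(\<lambda>((x,s),t). susp_cocycle n \<alpha> (x, s + (1 - s) * (1 - t))) ((x, s), 0) = {#}"
      "(\<lambda>((x,s),t). susp_cocycle n \<alpha> (x, s + (1 - s) * (1 - t))) ((x, s), 1) = susp_cocycle n \<alpha> (x, s)"
      by simp_all
  next
    fix x t assume x: "x \<in> topspace A" and t: "t \<in> {0..1::real}"
    then show "(\<lambda>((x,s),t). susp_cocycle n \<alpha> (x, s + (1 - s) * (1 - t))) ((x, 0), t) =
        (\<lambda>(b,t). cyl_susp n \<alpha> (H (b, 1 - t))) (f x, t)"
      by (simp add: Hf cyl_susp_cyl_map[of \<alpha>, OF \<alpha>0])
    show "(\<lambda>((x,s),t). susp_cocycle n \<alpha> (x, s + (1 - s) * (1 - t))) ((x, 1), t) = {#}"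
      by simp
  next
    fix s t :: real
    show "(\<lambda>((x,s),t). susp_cocycle n \<alpha> (x, s + (1 - s) * (1 - t))) ((a0, s), t) = {#}"
      by (simp add: susp_cocycle_eq_empty[of \<alpha>, OF \<alpha>0])
  qed
  ultimately show ?thesis by blast
qed

lemma cohomologous_descend_cylinder_homotopy:
  assumes cH: "continuous_map (prod_topology B unitI) (mapping_cylinder A a0 B f) H"
    and Hf: "\<And>x t. x \<in> topspace A \<Longrightarrow> t \<in> {0..1} \<Longrightarrow> H (f x, t) = cyl_map a0 f (x,t)"
    and \<Phi>: "continuous_map (prod_topology unitI (mapping_cylinder A a0 B f)) (SPS m) \<Phi>"
    and \<Phi>1: "\<And>t x. t \<in> {0..1} \<Longrightarrow> x \<in> topspace A \<Longrightarrow> \<Phi> (t, cyl_map a0 f (x,1)) = {#}"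
    and \<phi>0: "\<And>b. b \<in> topspace B \<Longrightarrow> \<Phi> (0, H (b,1)) = \<phi>0 b"
    and \<phi>1: "\<And>b. b \<in> topspace B \<Longrightarrow> \<Phi> (1, H (b,1)) = \<phi>1 b"
  shows "cohomologous C c0 m (descend \<phi>0) (descend \<phi>1)"
proof (rule cohomologous_if_homotopy_through_g)
  have "continuous_map (prod_topology unitI B) (prod_topology B unitI) (\<lambda>(t,b). (b, 1))"
    by (simp add: case_prod_unfold continuous_map_pairedI continuous_map_snd continuous_map_const)
  from continuous_map_compose[OF this cH]
  have "continuous_map (prod_topology unitI B) (prod_topology unitI (mapping_cylinder A a0 B f)) (\<lambda>(t,b). (t, H (b,1)))"
    by (simp add: case_prod_unfold continuous_map_pairedI continuous_map_fst o_def)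
  then show "continuous_map (prod_topology unitI B) (SPS m) (\<lambda>(t,b). \<Phi> (t, H (b,1)))"
    using continuous_map_compose[OF _ \<Phi>] by (simp add: case_prod_unfold o_def)
  have Kf: "(\<lambda>(t,b). \<Phi> (t, H (b,1))) (t, f x) = {#}" if "t \<in> {0..1}" "x \<in> topspace A" for t x
    using that by (simp add: Hf \<Phi>1)
  then show "(\<lambda>(t,b). \<Phi> (t, H (b,1))) (t, f x) = {#}" if "t \<in> {0..1}" "x \<in> topspace A" for t x
    using that by blast
  have fx: "f x \<in> topspace B" if "x \<in> topspace A" for x
    using that based_map_f continuous_map_in_topspace by (auto simp: based_map_def)
  have "\<phi>0 (f x) = {#}" "\<phi>1 (f x) = {#}" if "x \<in> topspace A" for x
    using Kf[of 0 x] Kf[of 1 x] that by (simp_all add: \<phi>0[OF fx] \<phi>1[OF fx])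
  then show "(\<lambda>(t,b). \<Phi> (t, H (b,1))) (0, b) = descend \<phi>0 (g b)"
    "(\<lambda>(t,b). \<Phi> (t, H (b,1))) (1, b) = descend \<phi>1 (g b)" if "b \<in> topspace B" for b
    using that by (simp_all add: descend_g \<phi>0 \<phi>1)
qed

lemma conn_rel_cohomologous_descend:
  assumes cr: "conn_rel A a0 B b0 f g n \<alpha> \<beta>" and \<beta>: "cocycle C c0 (Suc n) \<beta>"
    and cH: "continuous_map (prod_topology B unitI) (mapping_cylinder A a0 B f) H"
    and H0: "\<And>b. b \<in> topspace B \<Longrightarrow> H (b,0) = cyl_base b"
    and Hf: "\<And>x t. x \<in> topspace A \<Longrightarrow> t \<in> {0..1} \<Longrightarrow> H (f x, t) = cyl_map a0 f (x,t)"
  shows "cohomologous C c0 (Suc n) \<beta> (descend (\<lambda>b. cyl_susp n \<alpha> (H (b,1))))"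
proof -
  obtain HB HA where
    cHB: "continuous_map (prod_topology B unitI) (SPS (Suc n)) HB" and
    cHA: "continuous_map (prod_topology (prod_topology A unitI) unitI) (SPS (Suc n)) HA" and
    HB01: "\<forall>b\<in>topspace B. HB (b, 0) = \<beta> (g b) \<and> HB (b, 1) = {#}" and
    HBb0: "\<forall>t\<in>{0..1}. HB (b0, t) = {#}" and
    HA01: "\<forall>x\<in>topspace A. \<forall>s\<in>{0..1}. HA ((x, s), 0) = {#} \<and> HA ((x, s), 1) = susp_cocycle n \<alpha> (x, s)" and
    HAx: "\<forall>x\<in>topspace A. \<forall>t\<in>{0..1}. HA ((x, 0), t) = HB (f x, t) \<and> HA ((x, 1), t) = {#}" and
    HAa: "\<forall>s\<in>{0..1}. \<forall>t\<in>{0..1}. HA ((a0, s), t) = {#}"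
    using cr unfolding conn_rel_def by blast
  have c\<beta>: "continuous_map C (SPS (Suc n)) \<beta>" and \<beta>0: "\<beta> c0 = {#}"
    using \<beta> by (auto simp: cocycle_def based_map_def)
  have fa0: "f a0 = b0" and gf: "\<And>x. x \<in> topspace A \<Longrightarrow> g (f x) = c0"
    using based_map_f g_f by (simp_all add: based_map_def)
  have fx: "f x \<in> topspace B" if "x \<in> topspace A" for x
    using that based_map_f continuous_map_in_topspace by (auto simp: based_map_def)
  text \<open>First collapse the cylinder onto C, then deform \<beta> \<circ> q into the suspension along the
    homotopy (HB, HA) witnessing the relation.\<close>
  define q :: "('a + 'b) \<times> real \<Rightarrow> 'c" where "q = cyl_case g (\<lambda>_. c0)"
  have cq: "continuous_map (mapping_cylinder A a0 B f) C q"
    unfolding q_def using based_map_g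
    by (intro continuous_map_cyl_case) (auto simp: based_map_def continuous_map_const c0_in_C gf a0_in_A)
  have q_cyl_map: "q (cyl_map a0 f (x,t)) = c0" if "x \<in> topspace A" for x t
    using that by (simp add: q_def cyl_case_cyl_map gf)
  define \<phi> where "\<phi> = (\<lambda>b. \<beta> (q (H (b,1))))"
  have "cohomologous C c0 (Suc n) \<beta> (descend \<phi>)"
  proof (rule cohomologous_if_homotopy_through_g)
    have "continuous_map (prod_topology unitI B) (prod_topology B unitI) (\<lambda>(t,b). (b,t))"
      by (simp add: case_prod_unfold continuous_map_pairedI continuous_map_fst continuous_map_snd)
    from continuous_map_compose[OF continuous_map_compose[OF continuous_map_compose[OF this cH] cq] c\<beta>]
    show "continuous_map (prod_topology unitI B) (SPS (Suc n)) (\<lambda>(t,b). \<beta> (q (H (b,t))))"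
      by (simp add: case_prod_unfold o_def)
    have "\<phi> (f x) = {#}" if "x \<in> topspace A" for x
      using that by (simp add: \<phi>_def Hf q_cyl_map \<beta>0)
    then show "(\<lambda>(t,b). \<beta> (q (H (b,t)))) (1, b) = descend \<phi> (g b)" if "b \<in> topspace B" for b
      using that by (simp add: descend_g \<phi>_def)
  qed (simp_all add: Hf q_cyl_map \<beta>0 H0, simp add: q_def)
  also have "cohomologous C c0 (Suc n) (descend \<phi>) (descend (\<lambda>b. cyl_susp n \<alpha> (H (b,1))))"
  proof (rule cohomologous_descend_cylinder_homotopy[OF cH Hf])
    let ?\<Phi> = "\<lambda>(t,z). cyl_case (\<lambda>b. HB (b,t)) (\<lambda>p. HA (p,t)) z"
    have "continuous_map (prod_topology unitI B) (prod_topology B unitI) (\<lambda>(t,b). (b,t))"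
      "continuous_map (prod_topology unitI (prod_topology A unitI)) (prod_topology (prod_topology A unitI) unitI) (\<lambda>(t,p). (p,t))"
      by (simp_all add: case_prod_unfold continuous_map_pairedI continuous_map_fst continuous_map_snd)
    then show "continuous_map (prod_topology unitI (mapping_cylinder A a0 B f)) (SPS (Suc n)) ?\<Phi>"
      using continuous_map_compose[OF _ cHB] continuous_map_compose[OF _ cHA] HAx HAa HBb0 fa0
      by (intro continuous_map_prod_cyl_case) (auto simp: case_prod_unfold o_def)
    show "?\<Phi> (t, cyl_map a0 f (x,1)) = {#}" if "t \<in> {0..1}" "x \<in> topspace A" for t x
      using that HAx HBb0 fa0 by (simp add: cyl_case_cyl_map)
    show "?\<Phi> (0, H (b,1)) = \<phi> b" if "b \<in> topspace B" for b
      using continuous_map_in_topspace[OF cH, of "(b,1)"] that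
    proof (cases rule: mapping_cylinder_cases)
    qed (use HB01 HA01 fx gf \<beta>0 in \<open>auto simp: \<phi>_def q_def cyl_case_cyl_map\<close>)
    show "?\<Phi> (1, H (b,1)) = cyl_susp n \<alpha> (H (b,1))" if "b \<in> topspace B" for b
      using continuous_map_in_topspace[OF cH, of "(b,1)"] that
    proof (cases rule: mapping_cylinder_cases)
    qed (use HB01 HA01 fx in \<open>auto simp: cyl_susp_def cyl_case_cyl_map\<close>)
  qed
  finally show ?thesis .
qed

lemma cohomologous_descend_cyl_susp:
  assumes h: "cohomologous A a0 n \<alpha> \<alpha>'"
    and cH: "continuous_map (prod_topology B unitI) (mapping_cylinder A a0 B f) H"
    and Hf: "\<And>x t. x \<in> topspace A \<Longrightarrow> t \<in> {0..1} \<Longrightarrow> H (f x, t) = cyl_map a0 f (x,t)"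
  shows "cohomologous C c0 (Suc n) (descend (\<lambda>b. cyl_susp n \<alpha> (H (b,1)))) (descend (\<lambda>b. cyl_susp n \<alpha>' (H (b,1))))"
proof -
  obtain k where ck: "continuous_map (prod_topology unitI A) (SPS n) k"
    and k0: "\<And>x. k (0, x) = \<alpha> x" and k1: "\<And>x. k (1, x) = \<alpha>' x"
    and ka: "\<And>t. t \<in> {0..1} \<Longrightarrow> k (t, a0) = {#}"
    using h unfolding homotopic_with_def by auto
  show ?thesis
  proof (rule cohomologous_descend_cylinder_homotopy[OF cH Hf])
    show "continuous_map (prod_topology unitI (mapping_cylinder A a0 B f)) (SPS (Suc n))
        (\<lambda>(t,z). cyl_susp n (\<lambda>x. k (t,x)) z)"
      unfolding cyl_susp_def using continuous_map_susp_cocycle_homotopy[OF ck] ka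
      by (intro continuous_map_prod_cyl_case) (auto simp: continuous_map_const case_prod_unfold susp_cocycle_eq_empty)
    show "(\<lambda>(t,z). cyl_susp n (\<lambda>x. k (t,x)) z) (t, cyl_map a0 f (x,1)) = {#}" for t x
      by (simp add: cyl_susp_def cyl_case_cyl_map)
    have "(\<lambda>x. k (0,x)) = \<alpha>" "(\<lambda>x. k (1,x)) = \<alpha>'"
      by (simp_all add: k0 k1)
    then show "(\<lambda>(t,z). cyl_susp n (\<lambda>x. k (t,x)) z) (0, H (b,1)) = cyl_susp n \<alpha> (H (b,1))"
      "(\<lambda>(t,z). cyl_susp n (\<lambda>x. k (t,x)) z) (1, H (b,1)) = cyl_susp n \<alpha>' (H (b,1))" for b
      by simp_all
  qed
qed

lemma conn_rel_unique:
  assumes "conn_rel A a0 B b0 f g n \<alpha> \<beta>" "cocycle C c0 (Suc n) \<beta>"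
    and "conn_rel A a0 B b0 f g n \<alpha>' \<beta>'" "cocycle C c0 (Suc n) \<beta>'"
    and "cohomologous A a0 n \<alpha> \<alpha>'"
  shows "cohomologous C c0 (Suc n) \<beta> \<beta>'"
proof -
  obtain H where H: "continuous_map (prod_topology B unitI) (mapping_cylinder A a0 B f) H"
    "\<And>b. b \<in> topspace B \<Longrightarrow> H (b,0) = cyl_base b"
    "\<And>x t. x \<in> topspace A \<Longrightarrow> t \<in> {0..1} \<Longrightarrow> H (f x, t) = cyl_map a0 f (x,t)"
    "\<And>t. t \<in> {0..1} \<Longrightarrow> H (b0, t) = cyl_base b0"
    using cylinder_deformation by blast
  have "cohomologous C c0 (Suc n) \<beta> (descend (\<lambda>b. cyl_susp n \<alpha> (H (b,1))))"
    using assms(1,2) H(1-3) by (rule conn_rel_cohomologous_descend)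
  also have "cohomologous C c0 (Suc n) \<dots> (descend (\<lambda>b. cyl_susp n \<alpha>' (H (b,1))))"
    using assms(5) H(1,3) by (rule cohomologous_descend_cyl_susp)
  also have "cohomologous C c0 (Suc n) \<dots> \<beta>'"
    using conn_rel_cohomologous_descend[OF assms(3,4) H(1-3)] by (rule homotopic_with_symD)
  finally show ?thesis .
qed

end

text \<open>Applying the extensions of a and b to the two halves of a homotopy witnessing the
  relation for (\<alpha>, \<beta>) gives a homotopy witnessing it for the pulled back cocycles.\<close>

lemma conn_rel_sp_ext_compose:
  assumes seq1: "based_cofib_seq A1 x1 B1 y1 C1 z1 f1 g1"
    and seq2: "based_cofib_seq A2 x2 B2 y2 C2 z2 f2 g2"
    and a: "based_map A1 x1 (SP A2 x2) {#} a"
    and b: "based_map B1 y1 (SP B2 y2) {#} b"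
    and bf: "\<forall>x\<in>topspace A1. b (f1 x) = SPmap y2 f2 (a x)"
    and cg: "\<forall>y\<in>topspace B1. c (g1 y) = SPmap z2 g2 (b y)"
    and cr: "conn_rel A2 x2 B2 y2 f2 g2 n \<alpha> \<beta>" and \<beta>: "cocycle C2 z2 (Suc n) \<beta>"
  shows "conn_rel A1 x1 B1 y1 f1 g1 n (sp_ext \<alpha> \<circ> a) (sp_ext \<beta> \<circ> c)"
proof -
  interpret S1: cofibration_sequence A1 x1 B1 y1 C1 z1 f1 g1 by (rule cofibration_sequence.intro[OF seq1])
  interpret S2: cofibration_sequence A2 x2 B2 y2 C2 z2 f2 g2 by (rule cofibration_sequence.intro[OF seq2])
  obtain HB HA where
    cHB: "continuous_map (prod_topology B2 unitI) (SPS (Suc n)) HB" and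
    cHA: "continuous_map (prod_topology (prod_topology A2 unitI) unitI) (SPS (Suc n)) HA" and
    HB01: "\<forall>y\<in>topspace B2. HB (y, 0) = \<beta> (g2 y) \<and> HB (y, 1) = {#}" and
    HBb0: "\<forall>t\<in>{0..1}. HB (y2, t) = {#}" and
    HA01: "\<forall>x\<in>topspace A2. \<forall>s\<in>{0..1}. HA ((x, s), 0) = {#} \<and> HA ((x, s), 1) = susp_cocycle n \<alpha> (x, s)" and
    HAx: "\<forall>x\<in>topspace A2. \<forall>t\<in>{0..1}. HA ((x, 0), t) = HB (f2 x, t) \<and> HA ((x, 1), t) = {#}" and
    HAa: "\<forall>s\<in>{0..1}. \<forall>t\<in>{0..1}. HA ((x2, s), t) = {#}"
    using cr unfolding conn_rel_def by blast
  have \<beta>0: "\<beta> z2 = {#}"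
    using \<beta> by (simp add: cocycle_def based_map_def)
  have ca: "continuous_map A1 (SP A2 x2) a" and cb: "continuous_map B1 (SP B2 y2) b"
    using a b by (simp_all add: based_map_def)
  have a_in: "q \<in> topspace A2" if "x \<in> topspace A1" "q \<in># a x" for x q
    using continuous_map_in_topspace[OF ca that(1)] that(2) by (auto simp: sp_carrier_def)
  have b_in: "q \<in> topspace B2" if "y \<in> topspace B1" "q \<in># b y" for y q
    using continuous_map_in_topspace[OF cb that(1)] that(2) by (auto simp: sp_carrier_def)
  let ?HB1 = "\<lambda>(y,t). sp_ext (\<lambda>q. HB (q,t)) (b y)"
  let ?HA1 = "\<lambda>((x,s),t). sp_ext (\<lambda>q. HA ((q,s),t)) (a x)"
  show ?thesis
    unfolding conn_rel_def
  proof (intro exI conjI ballI)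
    have "continuous_map (prod_topology unitI B2) (SPS (Suc n)) (\<lambda>(t,q). HB (q,t))"
      using continuous_map_compose[OF continuous_map_pairedI[OF continuous_map_snd continuous_map_fst] cHB]
      by (simp add: o_def case_prod_unfold)
    moreover have "continuous_map (prod_topology B1 unitI) (SP B2 y2) (\<lambda>p. b (fst p))"
      using continuous_map_compose[OF continuous_map_fst cb] by (simp add: o_def)
    moreover have "(\<lambda>(t,q). HB (q,t)) (t, y2) = {#}" if "t \<in> topspace unitI" for t
      using HBb0 that by simp
    ultimately have "continuous_map (prod_topology B1 unitI) (SPS (Suc n))
        (\<lambda>p. sp_ext (\<lambda>q. (\<lambda>(t,q). HB (q,t)) (snd p, q)) (b (fst p)))"
      by (rule continuous_map_sp_ext_compose[OF locally_compact_space_unitI Hausdorff_space_unitI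
            S2.b0_in_B _ continuous_map_snd])
    then show "continuous_map (prod_topology B1 unitI) (SPS (Suc n)) ?HB1"
      by (simp add: case_prod_unfold)
    have "continuous_map (prod_topology (prod_topology unitI unitI) A2) (SPS (Suc n)) (\<lambda>((s,t),q). HA ((q,s),t))"
      using continuous_map_compose[OF continuous_map_pairedI[OF continuous_map_pairedI[OF continuous_map_snd
            continuous_map_fst_of[OF continuous_map_fst]] continuous_map_snd_of[OF continuous_map_fst]] cHA]
      by (simp add: o_def case_prod_unfold)
    moreover have "continuous_map (prod_topology (prod_topology A1 unitI) unitI) (prod_topology unitI unitI)
        (\<lambda>p. (snd (fst p), snd p))"
      by (rule continuous_map_pairedI[OF continuous_map_snd_of[OF continuous_map_fst] continuous_map_snd,
            unfolded o_def])
    moreover have "continuous_map (prod_topology (prod_topology A1 unitI) unitI) (SP A2 x2) (\<lambda>p. a (fst (fst p)))"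
      using continuous_map_compose[OF continuous_map_fst_of[OF continuous_map_fst] ca] by (simp add: o_def)
    moreover have "(\<lambda>((s,t),q). HA ((q,s),t)) (st, x2) = {#}" if "st \<in> topspace (prod_topology unitI unitI)" for st
      using HAa that by auto
    moreover have "locally_compact_space (prod_topology unitI unitI)"
      by (metis locally_compact_space_prod_topology locally_compact_space_unitI)
    moreover have "Hausdorff_space (prod_topology unitI unitI)"
      by (metis Hausdorff_space_prod_topology Hausdorff_space_unitI)
    ultimately have "continuous_map (prod_topology (prod_topology A1 unitI) unitI) (SPS (Suc n))
        (\<lambda>p. sp_ext (\<lambda>q. (\<lambda>((s,t),q). HA ((q,s),t)) ((snd (fst p), snd p), q)) (a (fst (fst p))))"
      by (intro continuous_map_sp_ext_compose[OF _ _ S2.a0_in_A])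
    then show "continuous_map (prod_topology (prod_topology A1 unitI) unitI) (SPS (Suc n)) ?HA1"
      by (simp add: case_prod_unfold)
  next
    fix y assume y: "y \<in> topspace B1"
    have "?HB1 (y, 0) = sp_ext (\<beta> \<circ> g2) (b y)"
      using HB01 b_in[OF y] by (auto intro: sp_ext_cong)
    also have "\<dots> = (sp_ext \<beta> \<circ> c) (g1 y)"
      using cg y sp_ext_SPmap[of \<beta> z2 g2, OF \<beta>0] by simp
    finally show "?HB1 (y, 0) = (sp_ext \<beta> \<circ> c) (g1 y)" .
    show "?HB1 (y, 1) = {#}"
      using HB01 b_in[OF y] by (auto intro: sp_ext_eq_empty)
  next
    fix t :: real assume "t \<in> {0..1}"
    show "?HB1 (y1, t) = {#}"
      using b by (simp add: based_map_def)
  next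
    fix x and s :: real assume x: "x \<in> topspace A1" and s: "s \<in> {0..1}"
    show "?HA1 ((x, s), 0) = {#}"
      using HA01 s a_in[OF x] by (auto intro: sp_ext_eq_empty)
    have "?HA1 ((x, s), 1) = sp_ext (\<lambda>q. susp_cocycle n \<alpha> (q, s)) (a x)"
      using HA01 s a_in[OF x] by (auto intro: sp_ext_cong)
    also have "\<dots> = susp_cocycle n (sp_ext \<alpha> \<circ> a) (x, s)"
      by (simp add: susp_cocycle_def SPmap_sp_ext)
    finally show "?HA1 ((x, s), 1) = susp_cocycle n (sp_ext \<alpha> \<circ> a) (x, s)" .
  next
    fix x and t :: real assume x: "x \<in> topspace A1" and t: "t \<in> {0..1}"
    have "?HA1 ((x, 0), t) = sp_ext ((\<lambda>q. HB (q,t)) \<circ> f2) (a x)"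
      using HAx t a_in[OF x] by (auto intro: sp_ext_cong)
    also have "\<dots> = ?HB1 (f1 x, t)"
      using sp_ext_SPmap[of "\<lambda>q. HB (q,t)" y2 f2] HBb0 t bf x by simp
    finally show "?HA1 ((x, 0), t) = ?HB1 (f1 x, t)" .
    show "?HA1 ((x, 1), t) = {#}"
      using HAx t a_in[OF x] by (auto intro: sp_ext_eq_empty)
  next
    fix s t :: real
    show "?HA1 ((x1, s), t) = {#}"
      using a by (simp add: based_map_def)
  qed
qed

lemma connecting_sp_pull_commute:
  assumes seq1: "based_cofib_seq A1 x1 B1 y1 C1 z1 f1 g1"
    and seq2: "based_cofib_seq A2 x2 B2 y2 C2 z2 f2 g2"
    and a: "based_map A1 x1 (SP A2 x2) {#} a"
    and b: "based_map B1 y1 (SP B2 y2) {#} b"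
    and c: "based_map C1 z1 (SP C2 z2) {#} c"
    and bf: "\<forall>x\<in>topspace A1. b (f1 x) = SPmap y2 f2 (a x)"
    and cg: "\<forall>y\<in>topspace B1. c (g1 y) = SPmap z2 g2 (b y)"
    and \<kappa>: "\<kappa> \<in> Hred A2 x2 n"
  shows "sp_pull C1 z1 (Suc n) c (connecting A2 x2 B2 y2 C2 z2 f2 g2 n \<kappa>)
           = connecting A1 x1 B1 y1 C1 z1 f1 g1 n (sp_pull A1 x1 n a \<kappa>)"
proof -
  interpret S1: cofibration_sequence A1 x1 B1 y1 C1 z1 f1 g1 by (rule cofibration_sequence.intro[OF seq1])
  interpret S2: cofibration_sequence A2 x2 B2 y2 C2 z2 f2 g2 by (rule cofibration_sequence.intro[OF seq2])
  obtain \<alpha>0 where \<alpha>0: "cocycle A2 x2 n \<alpha>0" "\<kappa> = hcls A2 x2 n \<alpha>0"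
    using \<kappa> by (auto simp: Hred_def)
  have \<alpha>: "cocycle A2 x2 n (rep \<kappa>)"
    using rep_hcls[OF \<alpha>0(1)] \<alpha>0(2) by simp
  define \<beta>2 where "\<beta>2 = (SOME \<beta>. cocycle C2 z2 (Suc n) \<beta> \<and> conn_rel A2 x2 B2 y2 f2 g2 n (rep \<kappa>) \<beta>)"
  have \<beta>2: "cocycle C2 z2 (Suc n) \<beta>2" "conn_rel A2 x2 B2 y2 f2 g2 n (rep \<kappa>) \<beta>2"
    using someI_ex[OF S2.conn_rel_exists[OF \<alpha>]] by (simp_all add: \<beta>2_def)
  define \<alpha>' where "\<alpha>' = rep (sp_pull A1 x1 n a \<kappa>)"
  have \<alpha>': "cocycle A1 x1 n \<alpha>'" "cohomologous A1 x1 n (sp_ext (rep \<kappa>) \<circ> a) \<alpha>'"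
    using rep_hcls[OF cocycle_sp_ext_compose[OF \<alpha> S2.a0_in_A a]] by (simp_all add: \<alpha>'_def sp_pull_def)
  define \<beta>1 where "\<beta>1 = (SOME \<beta>. cocycle C1 z1 (Suc n) \<beta> \<and> conn_rel A1 x1 B1 y1 f1 g1 n \<alpha>' \<beta>)"
  have \<beta>1: "cocycle C1 z1 (Suc n) \<beta>1" "conn_rel A1 x1 B1 y1 f1 g1 n \<alpha>' \<beta>1"
    using someI_ex[OF S1.conn_rel_exists[OF \<alpha>'(1)]] by (simp_all add: \<beta>1_def)
  have "sp_pull C1 z1 (Suc n) c (connecting A2 x2 B2 y2 C2 z2 f2 g2 n \<kappa>)
      = hcls C1 z1 (Suc n) (sp_ext (rep (hcls C2 z2 (Suc n) \<beta>2)) \<circ> c)"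
    by (simp add: connecting_def sp_pull_def \<beta>2_def)
  also have "\<dots> = hcls C1 z1 (Suc n) (sp_ext \<beta>2 \<circ> c)"
  proof -
    have "cohomologous C2 z2 (Suc n) \<beta>2 (rep (hcls C2 z2 (Suc n) \<beta>2))"
      using rep_hcls[OF \<beta>2(1)] by blast
    then have "cohomologous C1 z1 (Suc n) (sp_ext \<beta>2 \<circ> c) (sp_ext (rep (hcls C2 z2 (Suc n) \<beta>2)) \<circ> c)"
      using S2.c0_in_C c by (rule cohomologous_sp_ext_compose)
    then show ?thesis
      by (rule hcls_eq_if_cohomologous[symmetric])
  qed
  also have "\<dots> = hcls C1 z1 (Suc n) \<beta>1"
  proof (rule hcls_eq_if_cohomologous, rule S1.conn_rel_unique)
    show "conn_rel A1 x1 B1 y1 f1 g1 n (sp_ext (rep \<kappa>) \<circ> a) (sp_ext \<beta>2 \<circ> c)"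
      by (rule conn_rel_sp_ext_compose[OF seq1 seq2 a b bf cg \<beta>2(2,1)])
    show "cocycle C1 z1 (Suc n) (sp_ext \<beta>2 \<circ> c)"
      by (rule cocycle_sp_ext_compose[OF \<beta>2(1) S2.c0_in_C c])
    show "conn_rel A1 x1 B1 y1 f1 g1 n \<alpha>' \<beta>1" "cocycle C1 z1 (Suc n) \<beta>1"
      "cohomologous A1 x1 n (sp_ext (rep \<kappa>) \<circ> a) \<alpha>'"
      by (fact \<beta>1(2) \<beta>1(1) \<alpha>'(2))+
  qed
  also have "\<dots> = connecting A1 x1 B1 y1 C1 z1 f1 g1 n (sp_pull A1 x1 n a \<kappa>)"
    by (simp add: connecting_def \<beta>1_def \<alpha>'_def)
  finally show ?thesis .
qed

theorem lemma1p5: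
  fixes A1 :: "'a1 topology" and B1 :: "'b1 topology" and C1 :: "'c1 topology"
    and A2 :: "'a2 topology" and B2 :: "'b2 topology" and C2 :: "'c2 topology"
    and f1 :: "'a1 \<Rightarrow> 'b1" and g1 :: "'b1 \<Rightarrow> 'c1"
    and f2 :: "'a2 \<Rightarrow> 'b2" and g2 :: "'b2 \<Rightarrow> 'c2"
    and a :: "'a1 \<Rightarrow> 'a2 multiset" and b :: "'b1 \<Rightarrow> 'b2 multiset" and c :: "'c1 \<Rightarrow> 'c2 multiset"
  assumes seq1: "based_cofib_seq A1 x1 B1 y1 C1 z1 f1 g1"
    and seq2: "based_cofib_seq A2 x2 B2 y2 C2 z2 f2 g2"
    and a: "based_map A1 x1 (SP A2 x2) {#} a"
    and b: "based_map B1 y1 (SP B2 y2) {#} b"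
    and c: "based_map C1 z1 (SP C2 z2) {#} c"
    and bf: "\<forall>x\<in>topspace A1. b (f1 x) = SPmap y2 f2 (a x)"
    and cg: "\<forall>y\<in>topspace B1. c (g1 y) = SPmap z2 g2 (b y)"
  shows "\<forall>n. (\<forall>\<kappa>\<in>Hred C2 z2 n.
               sp_pull B1 y1 n b (pull B2 y2 n g2 \<kappa>) = pull B1 y1 n g1 (sp_pull C1 z1 n c \<kappa>))
          \<and> (\<forall>\<kappa>\<in>Hred B2 y2 n.
               sp_pull A1 x1 n a (pull A2 x2 n f2 \<kappa>) = pull A1 x1 n f1 (sp_pull B1 y1 n b \<kappa>))
          \<and> (\<forall>\<kappa>\<in>Hred A2 x2 n.
               sp_pull C1 z1 (Suc n) c (connecting A2 x2 B2 y2 C2 z2 f2 g2 n \<kappa>)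
               = connecting A1 x1 B1 y1 C1 z1 f1 g1 n (sp_pull A1 x1 n a \<kappa>))"
proof (intro allI conjI ballI)
  interpret S1: cofibration_sequence A1 x1 B1 y1 C1 z1 f1 g1 by (rule cofibration_sequence.intro[OF seq1])
  interpret S2: cofibration_sequence A2 x2 B2 y2 C2 z2 f2 g2 by (rule cofibration_sequence.intro[OF seq2])
  fix n :: nat
  show "sp_pull B1 y1 n b (pull B2 y2 n g2 \<kappa>) = pull B1 y1 n g1 (sp_pull C1 z1 n c \<kappa>)"
    if "\<kappa> \<in> Hred C2 z2 n" for \<kappa>
    using S1.based_map_g S2.based_map_g b c cg S1.b0_in_B S2.b0_in_B that by (rule sp_pull_pull_commute)
  show "sp_pull A1 x1 n a (pull A2 x2 n f2 \<kappa>) = pull A1 x1 n f1 (sp_pull B1 y1 n b \<kappa>)"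
    if "\<kappa> \<in> Hred B2 y2 n" for \<kappa>
    using S1.based_map_f S2.based_map_f a b bf S1.a0_in_A S2.a0_in_A that by (rule sp_pull_pull_commute)
  show "sp_pull C1 z1 (Suc n) c (connecting A2 x2 B2 y2 C2 z2 f2 g2 n \<kappa>)
      = connecting A1 x1 B1 y1 C1 z1 f1 g1 n (sp_pull A1 x1 n a \<kappa>)" if "\<kappa> \<in> Hred A2 x2 n" for \<kappa>
    using seq1 seq2 a b c bf cg that by (rule connecting_sp_pull_commute)
qed

end
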